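(* Let $N$ be an odd positive integer and $r\ge s\ge2$. The transfer homomorphism $V:(\Phi_r^s)^{\mathrm{ab}}\to\Gamma_1(N2^r)^{\mathrm{ab}}$ associated to the finite-index subgroup $\Gamma_1(N2^r)\subseteq\Phi_r^s$ commutes with the action of the Atkin operator $U$ on its source and target.
   Context: For $M\ge1$, $\Gamma_1(M)=\{\begin{pmatrix}a&b\\c&d\end{pmatrix}\in\mathrm{SL}_2(\mathbb{Z}) : c\equiv0,\ a\equiv d\equiv1 \pmod M\}$, $\Gamma_0(M)=\{c\equiv 0\pmod M\}$, $\Gamma^0(2)=\{b\equiv0\pmod 2\}$ (inside $\mathrm{SL}_2(\mathbb{Z})$). For $r\ge s\ge2$, $\Phi_r^s:=\Gamma_1(N2^s)\cap\Gamma_0(2^r)$, so $\Phi_r^r=\Gamma_1(N2^r)$; $G^{\mathrm{ab}}$ denotes abelianization. With $t=\begin{pmatrix}1&0\\0&2\end{pmatrix}$, the Atkin operator $U$ on $(\Phi_r^s)^{\mathrm{ab}}$ (for any $r\ge s\ge 2$) is the composite of the transfer $(\Phi_r^s)^{\mathrm{ab}}\to(\Phi_r^s\cap\Gamma^0(2))^{\mathrm{ab}}$, the map induced by the isomorphism $x\mapsto txt^{-1}$ from $\Phi_r^s\cap\Gamma^0(2)$ onto $\Phi_{r+1}^s$, and the inclusion-induced map $(\Phi_{r+1}^s)^{\mathrm{ab}}\to(\Phi_r^s)^{\mathrm{ab}}$. *)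

theory Defs
  imports "HOL-Algebra.Algebra" "HOL-Number_Theory.Cong"
begin

datatype m2 = M2 int int int int

fun m2_mult :: "m2 \<Rightarrow> m2 \<Rightarrow> m2" where
  "m2_mult (M2 p q u v) (M2 p2 q2 u2 v2) =
     M2 (p*p2 + q*u2) (p*q2 + q*v2) (u*p2 + v*u2) (u*q2 + v*v2)"

fun m2_det :: "m2 \<Rightarrow> int" where
  "m2_det (M2 p q u v) = p*v - q*u"

definition SL2Z :: "m2 monoid" where
  "SL2Z = \<lparr>carrier = {A. m2_det A = 1}, monoid.mult = m2_mult, one = M2 1 0 0 1\<rparr>"

definition Gamma1 :: "nat \<Rightarrow> m2 set" where
  "Gamma1 M = {M2 p q u v | p q u v. p*v - q*u = 1 \<and>
      [u = 0] (mod int M) \<and> [p = 1] (mod int M) \<and> [v = 1] (mod int M)}"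

definition Gamma0 :: "nat \<Rightarrow> m2 set" where
  "Gamma0 M = {M2 p q u v | p q u v. p*v - q*u = 1 \<and> [u = 0] (mod int M)}"

definition Gamma_up0_2 :: "m2 set" where
  "Gamma_up0_2 = {M2 p q u v | p q u v. p*v - q*u = 1 \<and> [q = 0] (mod 2)}"

definition Phi :: "nat \<Rightarrow> nat \<Rightarrow> nat \<Rightarrow> m2 set" where
  "Phi N r s = Gamma1 (N * 2^s) \<inter> Gamma0 (2^r)"

definition ab :: "m2 set \<Rightarrow> m2 set monoid" where
  "ab H = (SL2Z\<lparr>carrier := H\<rparr>) Mod (derived SL2Z H)"

definition right_transversal :: "m2 set \<Rightarrow> m2 set \<Rightarrow> m2 set \<Rightarrow> bool" where
  "right_transversal H K T \<longleftrightarrow> T \<subseteq> H \<and> (\<forall>h\<in>H. \<exists>!t. t \<in> T \<and> h \<in> r_coset SL2Z K t)"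

definition transfer :: "m2 set \<Rightarrow> m2 set \<Rightarrow> m2 set \<Rightarrow> m2 set" where
  "transfer H K Cl =
    (let h = (SOME h. h \<in> Cl);
         T = (SOME T. right_transversal H K T);
         nxt = (\<lambda>t. THE w. w \<in> T \<and> m2_mult t h \<in> r_coset SL2Z K w)
     in finprod (ab K)
          (\<lambda>t. r_coset SL2Z (derived SL2Z K)
                 (m2_mult (m2_mult t h) (m_inv SL2Z (nxt t)))) T)"

text \<open>Conjugation x \<mapsto> t x t^{-1} with t = diag(1,2).\<close>
fun conj_t :: "m2 \<Rightarrow> m2" where
  "conj_t (M2 p q u v) = M2 p (q div 2) (2*u) v"

text \<open>Map G'^ab -> G^ab induced by an inclusion G' \<subseteq> G.\<close>
definition ab_incl :: "m2 set \<Rightarrow> m2 set \<Rightarrow> m2 set" where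
  "ab_incl G Cl = set_mult SL2Z (derived SL2Z G) Cl"

definition atkin :: "nat \<Rightarrow> nat \<Rightarrow> nat \<Rightarrow> m2 set \<Rightarrow> m2 set" where
  "atkin N r s Cl =
     ab_incl (Phi N r s) (conj_t ` transfer (Phi N r s) (Phi N r s \<inter> Gamma_up0_2) Cl)"

end

theory Submission
  imports Defs
begin

text \<open>
  The Atkin operator \<open>U\<close> is transfer to \<open>\<Phi> \<inter> \<Gamma>\<^sup>0(2)\<close>, followed by conjugation
  \<open>x \<mapsto> t x t\<^sup>-\<^sup>1\<close> with \<open>t = diag(1,2)\<close> and by the map induced by an inclusion. Write
  \<open>\<Phi> = \<Phi>\<^sub>r\<^sup>s\<close> and \<open>\<Gamma> = \<Gamma>\<^sub>1(N 2\<^sup>r)\<close>. Conjugation by \<open>t\<close> maps \<open>\<Phi> \<inter> \<Gamma>\<^sup>0(2)\<close> into \<open>\<Phi>\<close>,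
  the preimage of \<open>\<Gamma>\<close> is \<open>\<Gamma> \<inter> \<Gamma>\<^sup>0(2)\<close>, and \<open>\<Phi> = \<Gamma> \<cdot> t (\<Phi> \<inter> \<Gamma>\<^sup>0(2)) t\<^sup>-\<^sup>1\<close> (for the last
  point \<open>N\<close> odd is used). Hence conjugation carries right transversals of \<open>\<Gamma> \<inter> \<Gamma>\<^sup>0(2)\<close> in
  \<open>\<Phi> \<inter> \<Gamma>\<^sup>0(2)\<close> to right transversals of \<open>\<Gamma>\<close> in \<open>\<Phi>\<close>, so transfer commutes with it.
  Together with transitivity of transfer along \<open>\<Phi> \<supseteq> \<Phi> \<inter> \<Gamma>\<^sup>0(2) \<supseteq> \<Gamma> \<inter> \<Gamma>\<^sup>0(2)\<close> and
  \<open>\<Phi> \<supseteq> \<Gamma> \<supseteq> \<Gamma> \<inter> \<Gamma>\<^sup>0(2)\<close>, both \<open>V \<circ> U\<close> and \<open>U \<circ> V\<close> become conjugation applied to the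
  transfer from \<open>\<Phi>\<close> to \<open>\<Gamma> \<inter> \<Gamma>\<^sup>0(2)\<close>.
\<close>

section \<open>Abelianization and right transversals\<close>

definition abelianization :: "('a, 'b) monoid_scheme \<Rightarrow> 'a set \<Rightarrow> 'a set monoid" where
  "abelianization G H = (G\<lparr>carrier := H\<rparr>) Mod derived G H"

definition is_right_transversal :: "('a, 'b) monoid_scheme \<Rightarrow> 'a set \<Rightarrow> 'a set \<Rightarrow> 'a set \<Rightarrow> bool" where
  "is_right_transversal G H K T \<longleftrightarrow> T \<subseteq> H \<and> (\<forall>h\<in>H. \<exists>!t. t \<in> T \<and> h \<in> K #>\<^bsub>G\<^esub> t)"

definition finite_index :: "('a, 'b) monoid_scheme \<Rightarrow> 'a set \<Rightarrow> 'a set \<Rightarrow> bool" where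
  "finite_index G H K \<longleftrightarrow> finite ((\<lambda>h. K #>\<^bsub>G\<^esub> h) ` H)"

lemma r_coset_carrier_update [simp]: "r_coset (G\<lparr>carrier := H\<rparr>) = r_coset G"
  by (intro ext) (simp add: r_coset_def)

lemma set_mult_carrier_update [simp]: "set_mult (G\<lparr>carrier := H\<rparr>) = set_mult G"
  by (intro ext) (simp add: set_mult_def)

lemma comm_group_hom_finprod:
  assumes A: "comm_group A" and B: "comm_group B" and f: "f \<in> hom A B"
    and g: "g \<in> I \<rightarrow> carrier A"
  shows "f (finprod A g I) = finprod B (\<lambda>i. f (g i)) I"
proof -
  interpret A: comm_group A by fact
  interpret B: comm_group B by fact
  interpret group_hom A B f by unfold_locales (rule f)
  show ?thesis
    using g
  proof (induction I rule: infinite_finite_induct)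
    case (insert i I)
    then have gi: "g i \<in> carrier A" and gI: "g \<in> I \<rightarrow> carrier A" by auto
    have "f (finprod A g (insert i I)) = f (g i) \<otimes>\<^bsub>B\<^esub> f (finprod A g I)"
      using insert gi gI by simp
    also have "\<dots> = finprod B (\<lambda>i. f (g i)) (insert i I)"
      using insert gi gI by (simp add: Pi_iff)
    finally show ?case .
  qed simp_all
qed

context comm_group
begin

lemma finprod_permute:
  assumes "bij_betw \<sigma> I I" and "f \<in> I \<rightarrow> carrier G"
  shows "finprod G (\<lambda>i. f (\<sigma> i)) I = finprod G f I"
  using finprod_reindex[of f \<sigma> I] assms by (simp add: bij_betw_def)

lemma finprod_coboundary:
  assumes \<sigma>: "bij_betw \<sigma> I I" and g: "g \<in> I \<rightarrow> carrier G" and k: "k \<in> I \<rightarrow> carrier G"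
  shows "finprod G (\<lambda>i. inv (g i) \<otimes> k i \<otimes> g (\<sigma> i)) I = finprod G k I"
proof -
  have g\<sigma>: "(\<lambda>i. g (\<sigma> i)) \<in> I \<rightarrow> carrier G" using g \<sigma> by (auto simp: bij_betw_def)
  have "finprod G (\<lambda>i. inv (g i) \<otimes> k i \<otimes> g (\<sigma> i)) I
      = finprod G (\<lambda>i. inv (g i)) I \<otimes> finprod G k I \<otimes> finprod G g I"
    using g k g\<sigma> finprod_permute[OF \<sigma> g] by (simp add: Pi_iff)
  also have "\<dots> = (finprod G (\<lambda>i. inv (g i)) I \<otimes> finprod G g I) \<otimes> finprod G k I"
    using g k by (simp add: Pi_iff m_ac)
  also have "finprod G (\<lambda>i. inv (g i)) I \<otimes> finprod G g I = finprod G (\<lambda>i. inv (g i) \<otimes> g i) I"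
    using g by (simp add: Pi_iff)
  also have "\<dots> = \<one>"
    using g by (intro finprod_one_eqI) (auto simp: Pi_iff)
  finally have "finprod G (\<lambda>i. inv (g i) \<otimes> k i \<otimes> g (\<sigma> i)) I = \<one> \<otimes> finprod G k I" .
  then show ?thesis using k by simp
qed

end

context group
begin

lemma subgroup_derived: "subgroup H G \<Longrightarrow> subgroup (derived G H) G"
  by (rule derived_is_subgroup) (rule subgroup.subset)

lemma abelianization_comm_group: "subgroup H G \<Longrightarrow> comm_group (abelianization G H)"
  unfolding abelianization_def by (rule derived_quot_of_subgroup_is_comm_group)

lemma abelianization_carrier:
  "subgroup H G \<Longrightarrow> carrier (abelianization G H) = (\<lambda>x. derived G H #> x) ` H"
  unfolding abelianization_def FactGroup_def RCOSETS_def r_coset_def by auto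

lemma rcos_in_abelianization:
  "subgroup H G \<Longrightarrow> x \<in> H \<Longrightarrow> derived G H #> x \<in> carrier (abelianization G H)"
  by (simp add: abelianization_carrier)

lemma abelianization_mult:
  assumes H: "subgroup H G" and x: "x \<in> H" and y: "y \<in> H"
  shows "(derived G H #> x) \<otimes>\<^bsub>abelianization G H\<^esub> (derived G H #> y) = derived G H #> (x \<otimes> y)"
proof -
  interpret N: normal "derived G H" "G\<lparr>carrier := H\<rparr>"
    by (rule derived_subgroup_is_normal[OF H])
  have "(derived G H #>\<^bsub>G\<lparr>carrier := H\<rparr>\<^esub> x) <#>\<^bsub>G\<lparr>carrier := H\<rparr>\<^esub> (derived G H #>\<^bsub>G\<lparr>carrier := H\<rparr>\<^esub> y)
      = derived G H #>\<^bsub>G\<lparr>carrier := H\<rparr>\<^esub> (x \<otimes>\<^bsub>G\<lparr>carrier := H\<rparr>\<^esub> y)"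
    by (rule N.rcos_sum) (use x y in auto)
  then show ?thesis
    by (simp add: abelianization_def FactGroup_def)
qed

lemma abelianization_one:
  "subgroup H G \<Longrightarrow> \<one>\<^bsub>abelianization G H\<^esub> = derived G H #> \<one>"
  unfolding abelianization_def FactGroup_def
  by (simp add: derived_in_carrier subgroup.subset)

lemma abelianization_inv:
  assumes H: "subgroup H G" and x: "x \<in> H"
  shows "inv\<^bsub>abelianization G H\<^esub> (derived G H #> x) = derived G H #> inv x"
proof -
  interpret A: comm_group "abelianization G H" by (rule abelianization_comm_group[OF H])
  have ix: "inv x \<in> H" by (rule subgroup.m_inv_closed[OF H x])
  have "(derived G H #> inv x) \<otimes>\<^bsub>abelianization G H\<^esub> (derived G H #> x) = \<one>\<^bsub>abelianization G H\<^esub>"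
    using x subgroup.subset[OF H] by (auto simp: abelianization_mult[OF H ix x] abelianization_one[OF H])
  then show ?thesis
    by (rule A.inv_equality[OF _ rcos_in_abelianization[OF H x] rcos_in_abelianization[OF H ix]])
qed

lemma rcos_mem_iff_rcos_eq:
  assumes "subgroup K G" and "x \<in> carrier G" and "y \<in> carrier G"
  shows "x \<in> K #> y \<longleftrightarrow> K #> x = K #> y"
  using assms repr_independence rcos_self by metis

lemma right_transversal_subset: "is_right_transversal G H K T \<Longrightarrow> T \<subseteq> H"
  by (simp add: is_right_transversal_def)

lemma right_transversal_eqI:
  assumes H: "subgroup H G" and K: "subgroup K G" and T: "is_right_transversal G H K T"
    and t1: "t1 \<in> T" and t2: "t2 \<in> T" and q: "t1 \<otimes> inv t2 \<in> K"
  shows "t1 = t2"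
proof -
  have "t1 \<in> H" "t2 \<in> H" using T t1 t2 by (auto simp: is_right_transversal_def)
  moreover from this have "t1 \<in> carrier G" "t2 \<in> carrier G" using subgroup.subset[OF H] by auto
  ultimately have "\<exists>!t. t \<in> T \<and> t1 \<in> K #> t" "t1 \<in> K #> t1" "t1 \<in> K #> t2"
    using T rcos_self[OF _ K] subgroup.rcos_module[OF K is_group] q
    by (auto simp: is_right_transversal_def)
  then show ?thesis using t1 t2 by blast
qed

lemma right_transversal_exists:
  assumes H: "subgroup H G" and K: "subgroup K G"
  shows "\<exists>T. is_right_transversal G H K T"
proof -
  define rep where "rep h = (SOME t. t \<in> H \<and> K #> t = K #> h)" for h
  have rep: "rep h \<in> H \<and> K #> rep h = K #> h" if "h \<in> H" for h
    unfolding rep_def by (rule someI[of _ h]) (use that in simp)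
  have carr: "x \<in> carrier G" if "x \<in> H" for x using that subgroup.subset[OF H] by blast
  have "\<exists>!t. t \<in> rep ` H \<and> h \<in> K #> t" if h: "h \<in> H" for h
  proof (rule ex1I[of _ "rep h"])
    show "rep h \<in> rep ` H \<and> h \<in> K #> rep h"
      using h rep[OF h] rcos_mem_iff_rcos_eq[OF K carr carr] by auto
  next
    fix t assume "t \<in> rep ` H \<and> h \<in> K #> t"
    then obtain h' where h': "h' \<in> H" "t = rep h'" "h \<in> K #> rep h'" by blast
    then have "K #> h = K #> h'"
      using rep[OF h'(1)] rcos_mem_iff_rcos_eq[OF K carr[OF h] carr] by auto
    then show "t = rep h" using h'(2) by (simp add: rep_def)
  qed
  then have "is_right_transversal G H K (rep ` H)"
    using rep by (auto simp: is_right_transversal_def)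
  then show ?thesis ..
qed

lemma finite_right_transversal:
  assumes H: "subgroup H G" and K: "subgroup K G" and T: "is_right_transversal G H K T"
    and fin: "finite_index G H K"
  shows "finite T"
proof -
  have TH: "T \<subseteq> H" by (rule right_transversal_subset[OF T])
  have "inj_on (\<lambda>t. K #> t) T"
  proof
    fix t1 t2 assume t: "t1 \<in> T" "t2 \<in> T" and "K #> t1 = K #> t2"
    then have "t1 \<otimes> inv t2 \<in> K"
      using TH subgroup.subset[OF H] rcos_mem_iff_rcos_eq[OF K] subgroup.rcos_module[OF K is_group]
      by (metis subsetD)
    then show "t1 = t2" by (rule right_transversal_eqI[OF H K T t])
  qed
  moreover have "finite ((\<lambda>t. K #> t) ` T)"
    using fin TH unfolding finite_index_def by (meson finite_subset image_mono)
  ultimately show ?thesis by (simp add: finite_image_iff)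
qed

lemma finite_index_if_finite_transversal:
  assumes H: "subgroup H G" and K: "subgroup K G" and T: "is_right_transversal G H K T"
    and fin: "finite T"
  shows "finite_index G H K"
proof -
  have "K #> h \<in> (\<lambda>t. K #> t) ` T" if h: "h \<in> H" for h
  proof -
    obtain t where "t \<in> T" "h \<in> K #> t" using T h by (auto simp: is_right_transversal_def)
    moreover have "h \<in> carrier G" "t \<in> carrier G"
      using h \<open>t \<in> T\<close> right_transversal_subset[OF T] subgroup.subset[OF H] by auto
    ultimately show ?thesis using rcos_mem_iff_rcos_eq[OF K] by auto
  qed
  then show ?thesis
    unfolding finite_index_def using fin by (meson finite_imageI finite_subset image_subsetI)
qed

end

section \<open>The transfer\<close>

definition transversal_perm :: "('a, 'b) monoid_scheme \<Rightarrow> 'a set \<Rightarrow> 'a set \<Rightarrow> 'a \<Rightarrow> 'a \<Rightarrow> 'a" where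
  "transversal_perm G T K h t = (THE w. w \<in> T \<and> t \<otimes>\<^bsub>G\<^esub> h \<in> K #>\<^bsub>G\<^esub> w)"

definition transfer_factor :: "('a, 'b) monoid_scheme \<Rightarrow> 'a set \<Rightarrow> 'a set \<Rightarrow> 'a \<Rightarrow> 'a \<Rightarrow> 'a" where
  "transfer_factor G T K h t = t \<otimes>\<^bsub>G\<^esub> h \<otimes>\<^bsub>G\<^esub> inv\<^bsub>G\<^esub> (transversal_perm G T K h t)"

definition transfer_wrt :: "('a, 'b) monoid_scheme \<Rightarrow> 'a set \<Rightarrow> 'a set \<Rightarrow> 'a \<Rightarrow> 'a set" where
  "transfer_wrt G T K h =
     finprod (abelianization G K) (\<lambda>t. derived G K #>\<^bsub>G\<^esub> transfer_factor G T K h t) T"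

definition transfer_elem :: "('a, 'b) monoid_scheme \<Rightarrow> 'a set \<Rightarrow> 'a set \<Rightarrow> 'a \<Rightarrow> 'a set" where
  "transfer_elem G H K h = transfer_wrt G (SOME T. is_right_transversal G H K T) K h"

definition transfer_class :: "('a, 'b) monoid_scheme \<Rightarrow> 'a set \<Rightarrow> 'a set \<Rightarrow> 'a set \<Rightarrow> 'a set" where
  "transfer_class G H K C = transfer_elem G H K (SOME h. h \<in> C)"

context group
begin

lemma mult_inv_cancel_left: "x \<in> carrier G \<Longrightarrow> a \<in> carrier G \<Longrightarrow> x \<otimes> (inv x \<otimes> a) = a"
  by (simp flip: m_assoc)

lemma inv_mult_cancel_left: "x \<in> carrier G \<Longrightarrow> a \<in> carrier G \<Longrightarrow> inv x \<otimes> (x \<otimes> a) = a"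
  by (simp flip: m_assoc)

context
  fixes H K T
  assumes H: "subgroup H G" and K: "subgroup K G" and T: "is_right_transversal G H K T"
begin

private lemma carrier_of_H: "x \<in> H \<Longrightarrow> x \<in> carrier G"
  using subgroup.subset[OF H] by blast

private lemma carrier_of_T: "t \<in> T \<Longrightarrow> t \<in> carrier G"
  using right_transversal_subset[OF T] carrier_of_H by blast

lemma transversal_perm_in:
  assumes "x \<in> H" and "h \<in> H"
  shows "transversal_perm G T K h x \<in> T" and "x \<otimes> h \<in> K #> transversal_perm G T K h x"
proof -
  have "\<exists>!w. w \<in> T \<and> x \<otimes> h \<in> K #> w"
    using T assms subgroup.m_closed[OF H] by (auto simp: is_right_transversal_def)
  then have "transversal_perm G T K h x \<in> T \<and> x \<otimes> h \<in> K #> transversal_perm G T K h x"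
    unfolding transversal_perm_def by (rule theI')
  then show "transversal_perm G T K h x \<in> T" and "x \<otimes> h \<in> K #> transversal_perm G T K h x"
    by auto
qed

lemma transversal_perm_eqI:
  assumes x: "x \<in> H" and h: "h \<in> H" and w: "w \<in> T" and q: "x \<otimes> h \<otimes> inv w \<in> K"
  shows "transversal_perm G T K h x = w"
proof -
  have "x \<otimes> h \<in> K #> w"
    using q x h w carrier_of_H carrier_of_T subgroup.rcos_module[OF K is_group] by simp
  moreover have "\<exists>!w. w \<in> T \<and> x \<otimes> h \<in> K #> w"
    using T x h subgroup.m_closed[OF H] by (auto simp: is_right_transversal_def)
  ultimately show ?thesis
    using transversal_perm_in[OF x h] w by blast
qed

lemma transfer_factor_in:
  assumes "x \<in> H" and "h \<in> H"
  shows "transfer_factor G T K h x \<in> K"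
  unfolding transfer_factor_def
  using transversal_perm_in[OF assms] assms carrier_of_H carrier_of_T
    subgroup.rcos_module[OF K is_group] by simp

lemma transversal_perm_bij:
  assumes fin: "finite T" and h: "h \<in> H"
  shows "bij_betw (transversal_perm G T K h) T T"
proof -
  let ?n = "transversal_perm G T K h"
  have nT: "?n t \<in> T" if "t \<in> T" for t
    using transversal_perm_in(1) right_transversal_subset[OF T] that h by blast
  have "inj_on ?n T"
  proof
    fix t1 t2 assume t: "t1 \<in> T" "t2 \<in> T" and e: "?n t1 = ?n t2"
    have tH: "t1 \<in> H" "t2 \<in> H" using t right_transversal_subset[OF T] by auto
    have "transfer_factor G T K h t1 \<otimes> inv (transfer_factor G T K h t2) \<in> K"
      using transfer_factor_in[OF tH(1) h] transfer_factor_in[OF tH(2) h]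
        subgroup.m_closed[OF K] subgroup.m_inv_closed[OF K] by blast
    also have "transfer_factor G T K h t1 \<otimes> inv (transfer_factor G T K h t2) = t1 \<otimes> inv t2"
      unfolding transfer_factor_def e
      using t nT h carrier_of_H carrier_of_T
      by (simp add: m_assoc inv_mult_group mult_inv_cancel_left inv_mult_cancel_left)
    finally show "t1 = t2" by (rule right_transversal_eqI[OF H K T t])
  qed
  then show ?thesis
    using fin nT by (simp add: bij_betw_def endo_inj_surj image_subsetI)
qed

lemma transversal_perm_mult:
  assumes x: "x \<in> H" and h1: "h1 \<in> H" and h2: "h2 \<in> H"
  shows "transversal_perm G T K (h1 \<otimes> h2) x
    = transversal_perm G T K h2 (transversal_perm G T K h1 x)"
    and "transfer_factor G T K (h1 \<otimes> h2) x
    = transfer_factor G T K h1 x \<otimes> transfer_factor G T K h2 (transversal_perm G T K h1 x)"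
proof -
  let ?n = "transversal_perm G T K h1 x"
  let ?w = "transversal_perm G T K h2 ?n"
  have n: "?n \<in> T" by (rule transversal_perm_in(1)[OF x h1])
  then have nH: "?n \<in> H" using right_transversal_subset[OF T] by blast
  have w: "?w \<in> T" by (rule transversal_perm_in(1)[OF nH h2])
  have split: "transfer_factor G T K h1 x \<otimes> transfer_factor G T K h2 ?n = x \<otimes> (h1 \<otimes> h2) \<otimes> inv ?w"
    unfolding transfer_factor_def
    using x h1 h2 n w carrier_of_H carrier_of_T by (simp add: m_assoc inv_mult_cancel_left)
  have "x \<otimes> (h1 \<otimes> h2) \<otimes> inv ?w \<in> K"
    unfolding split[symmetric]
    using subgroup.m_closed[OF K transfer_factor_in[OF x h1] transfer_factor_in[OF nH h2]] .
  then show eq: "transversal_perm G T K (h1 \<otimes> h2) x = ?w"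
    using transversal_perm_eqI[OF x _ w] subgroup.m_closed[OF H h1 h2] by blast
  show "transfer_factor G T K (h1 \<otimes> h2) x = transfer_factor G T K h1 x \<otimes> transfer_factor G T K h2 ?n"
    unfolding split by (simp add: transfer_factor_def eq)
qed

end

end

locale transfer_subgroups = group G for G :: "('a, 'b) monoid_scheme" (structure) +
  fixes H K :: "'a set"
  assumes subgroup_H: "subgroup H G" and subgroup_K: "subgroup K G" and K_subset_H: "K \<subseteq> H"
    and finite_index: "finite_index G H K"
begin

lemma carrier_of_H: "x \<in> H \<Longrightarrow> x \<in> carrier G"
  using subgroup.subset[OF subgroup_H] by blast

lemma transversal_in_H: "is_right_transversal G H K T \<Longrightarrow> t \<in> T \<Longrightarrow> t \<in> H"
  using right_transversal_subset by blast

lemma abelianization_K: "comm_group (abelianization G K)"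
  by (rule abelianization_comm_group[OF subgroup_K])

lemma transfer_factor_rcos_in:
  "is_right_transversal G H K T \<Longrightarrow> h \<in> H \<Longrightarrow>
    (\<lambda>t. derived G K #> transfer_factor G T K h t) \<in> T \<rightarrow> carrier (abelianization G K)"
  using rcos_in_abelianization[OF subgroup_K] transfer_factor_in[OF subgroup_H subgroup_K]
    transversal_in_H by blast

lemma transfer_wrt_closed:
  "is_right_transversal G H K T \<Longrightarrow> h \<in> H \<Longrightarrow> transfer_wrt G T K h \<in> carrier (abelianization G K)"
  unfolding transfer_wrt_def
  by (rule comm_monoid.finprod_closed[OF comm_group.axioms(1)[OF abelianization_K]])
    (rule transfer_factor_rcos_in)

lemma transfer_wrt_mult:
  assumes T: "is_right_transversal G H K T" and fin: "finite T" and h1: "h1 \<in> H" and h2: "h2 \<in> H"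
  shows "transfer_wrt G T K (h1 \<otimes> h2) = transfer_wrt G T K h1 \<otimes>\<^bsub>abelianization G K\<^esub> transfer_wrt G T K h2"
proof -
  interpret A: comm_group "abelianization G K" by (rule abelianization_K)
  let ?n = "transversal_perm G T K h1"
  define f where "f h t = derived G K #> transfer_factor G T K h t" for h t
  have f: "f h \<in> T \<rightarrow> carrier (abelianization G K)" if "h \<in> H" for h
    unfolding f_def using transfer_factor_rcos_in[OF T that] .
  have n: "bij_betw ?n T T" by (rule transversal_perm_bij[OF subgroup_H subgroup_K T fin h1])
  have "f (h1 \<otimes> h2) t = f h1 t \<otimes>\<^bsub>abelianization G K\<^esub> f h2 (?n t)" if t: "t \<in> T" for t
    unfolding f_def transversal_perm_mult(2)[OF subgroup_H subgroup_K T transversal_in_H[OF T t] h1 h2]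
    using abelianization_mult[OF subgroup_K] transfer_factor_in[OF subgroup_H subgroup_K T]
      transversal_perm_in(1)[OF subgroup_H subgroup_K T] transversal_in_H[OF T] t h1 h2 by metis
  then have "finprod (abelianization G K) (f (h1 \<otimes> h2)) T
      = finprod (abelianization G K) (\<lambda>t. f h1 t \<otimes>\<^bsub>abelianization G K\<^esub> f h2 (?n t)) T"
    using f[OF h1] f[OF h2] n by (intro A.finprod_cong') (auto simp: bij_betw_def intro!: A.m_closed)
  also have "\<dots> = finprod (abelianization G K) (f h1) T \<otimes>\<^bsub>abelianization G K\<^esub> finprod (abelianization G K) (f h2) T"
  proof -
    have "(\<lambda>t. f h2 (?n t)) \<in> T \<rightarrow> carrier (abelianization G K)"
      using f[OF h2] bij_betw_apply[OF n] by blast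
    then show ?thesis by (simp add: A.finprod_multf[OF f[OF h1]] A.finprod_permute[OF n f[OF h2]])
  qed
  finally show ?thesis unfolding transfer_wrt_def f_def .
qed

lemma transversal_change_inverse:
  assumes T: "is_right_transversal G H K T" and T': "is_right_transversal G H K T'" and t: "t \<in> T"
  shows "transversal_perm G T K \<one> (transversal_perm G T' K \<one> t) = t"
proof -
  let ?w = "transversal_perm G T' K \<one> t"
  have tH: "t \<in> H" and one: "\<one> \<in> H" using transversal_in_H[OF T t] subgroup.one_closed[OF subgroup_H] .
  have w: "?w \<in> T'" by (rule transversal_perm_in(1)[OF subgroup_H subgroup_K T' tH one])
  have "inv (transfer_factor G T' K \<one> t) \<in> K"
    using transfer_factor_in[OF subgroup_H subgroup_K T' tH one] subgroup.m_inv_closed[OF subgroup_K] by blast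
  also have "inv (transfer_factor G T' K \<one> t) = ?w \<otimes> \<one> \<otimes> inv t"
    unfolding transfer_factor_def
    using tH w transversal_in_H[OF T'] carrier_of_H by (simp add: inv_mult_group)
  finally show ?thesis
    by (rule transversal_perm_eqI[OF subgroup_H subgroup_K T transversal_in_H[OF T' w] one t])
qed

lemma transversal_change_bij:
  assumes T: "is_right_transversal G H K T" and T': "is_right_transversal G H K T'"
  shows "bij_betw (transversal_perm G T' K \<one>) T T'"
proof (rule bij_betw_byWitness[where f' = "transversal_perm G T K \<one>"])
  have one: "\<one> \<in> H" by (rule subgroup.one_closed[OF subgroup_H])
  show "\<forall>t\<in>T. transversal_perm G T K \<one> (transversal_perm G T' K \<one> t) = t"
    using transversal_change_inverse[OF T T'] by blast
  show "\<forall>t\<in>T'. transversal_perm G T' K \<one> (transversal_perm G T K \<one> t) = t"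
    using transversal_change_inverse[OF T' T] by blast
  show "transversal_perm G T' K \<one> ` T \<subseteq> T'" "transversal_perm G T K \<one> ` T' \<subseteq> T"
    using transversal_perm_in(1)[OF subgroup_H subgroup_K _ _ one] transversal_in_H T T' by blast+
qed

lemma transfer_factor_change:
  assumes T: "is_right_transversal G H K T" and T': "is_right_transversal G H K T'"
    and h: "h \<in> H" and t: "t \<in> T"
  shows "transfer_factor G T' K h (transversal_perm G T' K \<one> t)
    = inv (transfer_factor G T' K \<one> t) \<otimes> transfer_factor G T K h t
      \<otimes> transfer_factor G T' K \<one> (transversal_perm G T K h t)"
proof -
  let ?\<sigma> = "transversal_perm G T' K \<one>" and ?n = "transversal_perm G T K h"
  let ?a = "transfer_factor G T' K \<one>" and ?k = "transfer_factor G T K h"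
  have one: "\<one> \<in> H" by (rule subgroup.one_closed[OF subgroup_H])
  have tH: "t \<in> H" by (rule transversal_in_H[OF T t])
  have nt: "?n t \<in> T" and nH: "?n t \<in> H"
    using transversal_perm_in(1)[OF subgroup_H subgroup_K T tH h] transversal_in_H[OF T] by auto
  have \<sigma>T': "?\<sigma> x \<in> T'" if "x \<in> H" for x
    by (rule transversal_perm_in(1)[OF subgroup_H subgroup_K T' that one])
  have c: "t \<in> carrier G" "?n t \<in> carrier G" "?\<sigma> t \<in> carrier G" "?\<sigma> (?n t) \<in> carrier G" "h \<in> carrier G"
    using tH nH \<sigma>T' transversal_in_H[OF T'] h carrier_of_H by blast+
  have eq: "inv (?a t) \<otimes> ?k t \<otimes> ?a (?n t) = ?\<sigma> t \<otimes> h \<otimes> inv (?\<sigma> (?n t))"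
    unfolding transfer_factor_def using c by (simp add: m_assoc inv_mult_group inv_mult_cancel_left)
  have "inv (?a t) \<otimes> ?k t \<otimes> ?a (?n t) \<in> K"
    using transfer_factor_in[OF subgroup_H subgroup_K] T T' tH nH one h
      subgroup.m_closed[OF subgroup_K] subgroup.m_inv_closed[OF subgroup_K] by meson
  then have "transversal_perm G T' K h (?\<sigma> t) = ?\<sigma> (?n t)"
    unfolding eq using transversal_perm_eqI[OF subgroup_H subgroup_K T'] \<sigma>T' tH nH h
      transversal_in_H[OF T'] by blast
  then have "transfer_factor G T' K h (?\<sigma> t) = ?\<sigma> t \<otimes> h \<otimes> inv (?\<sigma> (?n t))"
    by (simp add: transfer_factor_def)
  then show ?thesis unfolding eq .
qed

text \<open>
  Passing from \<open>T\<close> to \<open>T'\<close> (via \<open>transversal_perm G T' K \<one>\<close>, which sends \<open>t\<close> to the representative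
  of \<open>K t\<close> in \<open>T'\<close>) multiplies the factors by a coboundary, which cancels in the abelian product.
\<close>

lemma transfer_wrt_independent:
  assumes T: "is_right_transversal G H K T" and T': "is_right_transversal G H K T'" and h: "h \<in> H"
  shows "transfer_wrt G T' K h = transfer_wrt G T K h"
proof -
  interpret A: comm_group "abelianization G K" by (rule abelianization_K)
  let ?\<sigma> = "transversal_perm G T' K \<one>" and ?n = "transversal_perm G T K h"
  define a where "a t = transfer_factor G T' K \<one> t" for t
  define k where "k t = transfer_factor G T K h t" for t
  have one: "\<one> \<in> H" by (rule subgroup.one_closed[OF subgroup_H])
  have \<sigma>: "bij_betw ?\<sigma> T T'" by (rule transversal_change_bij[OF T T'])
  have n: "bij_betw ?n T T"
    by (rule transversal_perm_bij[OF subgroup_H subgroup_K T finite_right_transversal[OF subgroup_H subgroup_K T finite_index] h])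
  have aK: "a t \<in> K" and kK: "k t \<in> K" if "t \<in> T" for t
    unfolding a_def k_def using transfer_factor_in[OF subgroup_H subgroup_K] T' T one h transversal_in_H[OF T that] by blast+
  define g where "g t = derived G K #> a t" for t
  define f where "f t = derived G K #> k t" for t
  have g: "g \<in> T \<rightarrow> carrier (abelianization G K)" and f: "f \<in> T \<rightarrow> carrier (abelianization G K)"
    unfolding g_def f_def using rcos_in_abelianization[OF subgroup_K] aK kK by blast+
  have factor_class: "derived G K #> transfer_factor G T' K h (?\<sigma> t)
      = inv\<^bsub>abelianization G K\<^esub> g t \<otimes>\<^bsub>abelianization G K\<^esub> f t \<otimes>\<^bsub>abelianization G K\<^esub> g (?n t)"
    if t: "t \<in> T" for t
  proof -
    have nt: "?n t \<in> T" using bij_betw_apply[OF n t] .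
    have iaK: "inv (a t) \<in> K" using subgroup.m_inv_closed[OF subgroup_K aK[OF t]] .
    show ?thesis
      unfolding transfer_factor_change[OF T T' h t, folded a_def k_def] g_def f_def
        abelianization_inv[OF subgroup_K aK[OF t]]
      using abelianization_mult[OF subgroup_K] iaK kK[OF t] aK[OF nt] subgroup.m_closed[OF subgroup_K]
      by metis
  qed
  have "transfer_wrt G T' K h = finprod (abelianization G K) (\<lambda>t. derived G K #> transfer_factor G T' K h (?\<sigma> t)) T"
    unfolding transfer_wrt_def
    using A.finprod_reindex[OF _ bij_betw_imp_inj_on[OF \<sigma>]] transfer_factor_rcos_in[OF T' h]
    by (simp add: bij_betw_imp_surj_on[OF \<sigma>])
  also have "\<dots> = finprod (abelianization G K) (\<lambda>t. inv\<^bsub>abelianization G K\<^esub> g t \<otimes>\<^bsub>abelianization G K\<^esub> f t \<otimes>\<^bsub>abelianization G K\<^esub> g (?n t)) T"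
    using g f bij_betw_apply[OF n] factor_class by (intro A.finprod_cong') (auto intro!: A.m_closed)
  also have "\<dots> = finprod (abelianization G K) f T"
    by (rule A.finprod_coboundary[OF n g f])
  also have "\<dots> = transfer_wrt G T K h"
    unfolding transfer_wrt_def f_def k_def ..
  finally show ?thesis .
qed

lemma transfer_elem_eq:
  assumes T: "is_right_transversal G H K T" and h: "h \<in> H"
  shows "transfer_elem G H K h = transfer_wrt G T K h"
  unfolding transfer_elem_def
  using transfer_wrt_independent[OF T _ h] someI_ex[OF right_transversal_exists[OF subgroup_H subgroup_K]]
  by blast

lemma transfer_elem_closed: "h \<in> H \<Longrightarrow> transfer_elem G H K h \<in> carrier (abelianization G K)"
  using right_transversal_exists[OF subgroup_H subgroup_K] transfer_elem_eq transfer_wrt_closed by metis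

lemma transfer_elem_mult:
  assumes "h1 \<in> H" and "h2 \<in> H"
  shows "transfer_elem G H K (h1 \<otimes> h2)
    = transfer_elem G H K h1 \<otimes>\<^bsub>abelianization G K\<^esub> transfer_elem G H K h2"
proof -
  obtain T where T: "is_right_transversal G H K T"
    using right_transversal_exists[OF subgroup_H subgroup_K] by blast
  have fin: "finite T" by (rule finite_right_transversal[OF subgroup_H subgroup_K T finite_index])
  show ?thesis
    using transfer_elem_eq[OF T] transfer_wrt_mult[OF T fin assms] assms
      subgroup.m_closed[OF subgroup_H] by simp
qed

lemma transfer_elem_hom: "transfer_elem G H K \<in> hom (G\<lparr>carrier := H\<rparr>) (abelianization G K)"
  using transfer_elem_closed transfer_elem_mult by (auto intro!: homI)

lemma transfer_elem_derived:
  assumes x: "x \<in> derived G H"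
  shows "transfer_elem G H K x = \<one>\<^bsub>abelianization G K\<^esub>"
proof -
  interpret A: comm_group "abelianization G K" by (rule abelianization_K)
  interpret Tr: group_hom "G\<lparr>carrier := H\<rparr>" "abelianization G K" "transfer_elem G H K"
    using subgroup_imp_group[OF subgroup_H] A.is_group transfer_elem_hom
    by (simp add: group_hom_def group_hom_axioms_def)
  have "transfer_elem G H K ` derived G H = derived (abelianization G K) (transfer_elem G H K ` H)"
    using Tr.derived_img[of H] derived_consistent[OF subset_refl subgroup_H] by simp
  also have "\<dots> = {\<one>\<^bsub>abelianization G K\<^esub>}"
    using Tr.hom_closed by (intro A.derived_eq_singleton) auto
  finally show ?thesis using x by blast
qed

lemma transfer_class_rcos:
  assumes h: "h \<in> H"
  shows "transfer_class G H K (derived G H #> h) = transfer_elem G H K h"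
proof -
  interpret A: comm_group "abelianization G K" by (rule abelianization_K)
  interpret D: subgroup "derived G H" G by (rule subgroup_derived[OF subgroup_H])
  let ?x = "SOME x. x \<in> derived G H #> h"
  have "h \<in> derived G H #> h" using rcos_self[OF carrier_of_H[OF h] D.subgroup_axioms] .
  then have x: "?x \<in> derived G H #> h" by (rule someI)
  then obtain d where d: "d \<in> derived G H" and xd: "?x = d \<otimes> h" by (auto simp: r_coset_def)
  have dH: "d \<in> H" using d derived_incl[OF subset_refl subgroup_H] by blast
  have xH: "?x \<in> H" unfolding xd using subgroup.m_closed[OF subgroup_H dH h] .
  have q: "?x \<otimes> inv h \<in> derived G H"
    unfolding xd using d dH h carrier_of_H by (simp add: m_assoc)
  have ih: "inv h \<in> H" by (rule subgroup.m_inv_closed[OF subgroup_H h])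
  have "transfer_elem G H K ?x = transfer_elem G H K (?x \<otimes> inv h \<otimes> h)"
    using xH h carrier_of_H by (simp add: m_assoc)
  also have "\<dots> = transfer_elem G H K h"
    using transfer_elem_mult transfer_elem_closed transfer_elem_derived[OF q] xH ih h
      subgroup.m_closed[OF subgroup_H] by simp
  finally show ?thesis unfolding transfer_class_def .
qed

lemma transfer_class_hom:
  "transfer_class G H K \<in> hom (abelianization G H) (abelianization G K)"
proof (rule homI)
  fix C1 assume "C1 \<in> carrier (abelianization G H)"
  then obtain x where "x \<in> H" "C1 = derived G H #> x"
    using abelianization_carrier[OF subgroup_H] by auto
  then show "transfer_class G H K C1 \<in> carrier (abelianization G K)"
    using transfer_class_rcos transfer_elem_closed by simp
next
  fix C1 C2 assume "C1 \<in> carrier (abelianization G H)" "C2 \<in> carrier (abelianization G H)"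
  then obtain x y where "x \<in> H" "y \<in> H" "C1 = derived G H #> x" "C2 = derived G H #> y"
    using abelianization_carrier[OF subgroup_H] by auto
  then show "transfer_class G H K (C1 \<otimes>\<^bsub>abelianization G H\<^esub> C2)
      = transfer_class G H K C1 \<otimes>\<^bsub>abelianization G K\<^esub> transfer_class G H K C2"
    using subgroup.m_closed[OF subgroup_H]
    by (simp add: abelianization_mult[OF subgroup_H] transfer_class_rcos transfer_elem_mult)
qed

end

section \<open>Transitivity of the transfer\<close>

locale transfer_tower =
  group G + HK: transfer_subgroups G H K + KJ: transfer_subgroups G K J
  for G :: "('a, 'b) monoid_scheme" (structure) and H K J
begin

lemma product_transversal_eqI:
  assumes T: "is_right_transversal G H K T" and S: "is_right_transversal G K J S"
    and s: "s1 \<in> S" "s2 \<in> S" and t: "t1 \<in> T" "t2 \<in> T"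
    and q: "(s1 \<otimes> t1) \<otimes> inv (s2 \<otimes> t2) \<in> J"
  shows "s1 = s2 \<and> t1 = t2"
proof -
  have sK: "s1 \<in> K" "s2 \<in> K" using s KJ.transversal_in_H[OF S] by auto
  have c: "s1 \<in> carrier G" "s2 \<in> carrier G" "t1 \<in> carrier G" "t2 \<in> carrier G"
    using sK t HK.transversal_in_H[OF T] HK.carrier_of_H KJ.carrier_of_H by auto
  have qK: "(s1 \<otimes> t1) \<otimes> inv (s2 \<otimes> t2) \<in> K" using q KJ.K_subset_H by blast
  have "inv s1 \<otimes> ((s1 \<otimes> t1) \<otimes> inv (s2 \<otimes> t2)) \<otimes> s2 \<in> K"
    using sK qK subgroup.m_closed[OF HK.subgroup_K] subgroup.m_inv_closed[OF HK.subgroup_K] by blast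
  also have "inv s1 \<otimes> ((s1 \<otimes> t1) \<otimes> inv (s2 \<otimes> t2)) \<otimes> s2 = t1 \<otimes> inv t2"
    using c by (simp add: m_assoc inv_mult_group inv_mult_cancel_left)
  finally have tt: "t1 = t2" by (rule right_transversal_eqI[OF HK.subgroup_H HK.subgroup_K T t])
  have "s1 \<otimes> inv s2 \<in> J"
    using q c unfolding tt by (simp add: m_assoc inv_mult_group mult_inv_cancel_left)
  then have "s1 = s2" by (rule right_transversal_eqI[OF KJ.subgroup_H KJ.subgroup_K S s])
  with tt show ?thesis by simp
qed

lemma product_transversal:
  assumes T: "is_right_transversal G H K T" and S: "is_right_transversal G K J S"
  shows "is_right_transversal G H J (S <#> T)"
  unfolding is_right_transversal_def
proof (intro conjI ballI)
  show ST_H: "S <#> T \<subseteq> H"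
    using KJ.transversal_in_H[OF S] HK.transversal_in_H[OF T] HK.K_subset_H
      subgroup.m_closed[OF HK.subgroup_H] by (fastforce simp: set_mult_def)
  fix h assume h: "h \<in> H"
  obtain t where t: "t \<in> T" "h \<in> K #> t" using T h by (auto simp: is_right_transversal_def)
  have c: "h \<in> carrier G" "t \<in> carrier G"
    using h t HK.transversal_in_H[OF T] HK.carrier_of_H by auto
  have "h \<otimes> inv t \<in> K" using t(2) c subgroup.rcos_module[OF HK.subgroup_K is_group] by simp
  then obtain s where s: "s \<in> S" "h \<otimes> inv t \<in> J #> s" using S by (auto simp: is_right_transversal_def)
  have cs: "s \<in> carrier G" using s KJ.transversal_in_H[OF S] KJ.carrier_of_H by blast
  have mem: "h \<in> J #> x \<longleftrightarrow> h \<otimes> inv x \<in> J" if "x \<in> S <#> T" for x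
    using that ST_H c HK.carrier_of_H subgroup.rcos_module[OF KJ.subgroup_K is_group] by blast
  have "(h \<otimes> inv t) \<otimes> inv s \<in> J"
    using s cs c subgroup.rcos_module[OF KJ.subgroup_K is_group] by simp
  then have hst: "h \<otimes> inv (s \<otimes> t) \<in> J" using c cs by (simp add: m_assoc inv_mult_group)
  show "\<exists>!x. x \<in> S <#> T \<and> h \<in> J #> x"
  proof (rule ex1I[of _ "s \<otimes> t"])
    show "s \<otimes> t \<in> S <#> T \<and> h \<in> J #> s \<otimes> t"
      using s(1) t(1) hst mem by (auto simp: set_mult_def)
  next
    fix x assume x: "x \<in> S <#> T \<and> h \<in> J #> x"
    then obtain s' t' where st': "s' \<in> S" "t' \<in> T" "x = s' \<otimes> t'" by (auto simp: set_mult_def)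
    have c': "s' \<in> carrier G" "t' \<in> carrier G"
      using st' KJ.transversal_in_H[OF S] HK.transversal_in_H[OF T] HK.K_subset_H HK.carrier_of_H by auto
    have "inv (h \<otimes> inv (s' \<otimes> t')) \<otimes> (h \<otimes> inv (s \<otimes> t)) \<in> J"
      using x mem st' hst subgroup.m_closed[OF KJ.subgroup_K] subgroup.m_inv_closed[OF KJ.subgroup_K] by auto
    also have "inv (h \<otimes> inv (s' \<otimes> t')) \<otimes> (h \<otimes> inv (s \<otimes> t)) = (s' \<otimes> t') \<otimes> inv (s \<otimes> t)"
      using c c' cs by (simp add: m_assoc inv_mult_group inv_mult_cancel_left)
    finally show "x = s \<otimes> t" using product_transversal_eqI[OF T S st'(1) s(1) st'(2) t(1)] st'(3) by simp
  qed
qed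

lemma product_transversal_inj:
  assumes T: "is_right_transversal G H K T" and S: "is_right_transversal G K J S"
  shows "inj_on (\<lambda>(s, t). s \<otimes> t) (S \<times> T)"
proof (rule inj_onI, clarify)
  fix s1 t1 s2 t2 assume st: "s1 \<in> S" "t1 \<in> T" "s2 \<in> S" "t2 \<in> T" and e: "s1 \<otimes> t1 = s2 \<otimes> t2"
  have "s2 \<otimes> t2 \<in> carrier G"
    using st KJ.transversal_in_H[OF S] HK.transversal_in_H[OF T] HK.K_subset_H HK.carrier_of_H by blast
  then have "(s1 \<otimes> t1) \<otimes> inv (s2 \<otimes> t2) \<in> J"
    unfolding e using subgroup.one_closed[OF KJ.subgroup_K] by simp
  then show "s1 = s2 \<and> t1 = t2" by (rule product_transversal_eqI[OF T S st(1,3) st(2,4)])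
qed

lemma finite_index_H_J: "finite_index G H J"
proof -
  obtain T where T: "is_right_transversal G H K T"
    using right_transversal_exists[OF HK.subgroup_H HK.subgroup_K] by blast
  obtain S where S: "is_right_transversal G K J S"
    using right_transversal_exists[OF KJ.subgroup_H KJ.subgroup_K] by blast
  have "finite S" "finite T"
    using finite_right_transversal HK.subgroup_H HK.subgroup_K KJ.subgroup_K T S
      HK.finite_index KJ.finite_index by blast+
  then have "finite (S <#> T)" by (simp add: set_mult_def)
  then show ?thesis
    by (rule finite_index_if_finite_transversal[OF HK.subgroup_H KJ.subgroup_K product_transversal[OF T S]])
qed

sublocale HJ: transfer_subgroups G H J
  using HK.subgroup_H KJ.subgroup_K order_trans[OF KJ.K_subset_H HK.K_subset_H] finite_index_H_J
  by (simp add: transfer_subgroups_def transfer_subgroups_axioms_def is_group)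

lemma transfer_factor_product:
  assumes T: "is_right_transversal G H K T" and S: "is_right_transversal G K J S"
    and h: "h \<in> H" and s: "s \<in> S" and t: "t \<in> T"
  shows "transfer_factor G (S <#> T) J h (s \<otimes> t) = transfer_factor G S J (transfer_factor G T K h t) s"
proof -
  define k where "k = transfer_factor G T K h t"
  define t' where "t' = transversal_perm G T K h t"
  define s' where "s' = transversal_perm G S J k s"
  have tH: "t \<in> H" and sK: "s \<in> K" using t s HK.transversal_in_H[OF T] KJ.transversal_in_H[OF S] by auto
  have k: "k \<in> K" unfolding k_def by (rule transfer_factor_in[OF HK.subgroup_H HK.subgroup_K T tH h])
  have t': "t' \<in> T" unfolding t'_def by (rule transversal_perm_in(1)[OF HK.subgroup_H HK.subgroup_K T tH h])
  have s': "s' \<in> S" unfolding s'_def by (rule transversal_perm_in(1)[OF KJ.subgroup_H KJ.subgroup_K S sK k])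
  have c: "s \<in> carrier G" "t \<in> carrier G" "s' \<in> carrier G" "t' \<in> carrier G" "h \<in> carrier G"
    using sK tH h t' s' HK.transversal_in_H[OF T] KJ.transversal_in_H[OF S] HK.K_subset_H HK.carrier_of_H
    by auto
  have "transfer_factor G S J k s = s \<otimes> k \<otimes> inv s'"
    by (simp add: transfer_factor_def s'_def)
  also have "\<dots> = (s \<otimes> t) \<otimes> h \<otimes> inv (s' \<otimes> t')"
    using c by (simp add: k_def t'_def transfer_factor_def m_assoc inv_mult_group)
  finally have eq: "transfer_factor G S J k s = (s \<otimes> t) \<otimes> h \<otimes> inv (s' \<otimes> t')" .
  have "(s \<otimes> t) \<otimes> h \<otimes> inv (s' \<otimes> t') \<in> J"
    unfolding eq[symmetric] by (rule transfer_factor_in[OF KJ.subgroup_H KJ.subgroup_K S sK k])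
  moreover have "s \<otimes> t \<in> S <#> T" "s' \<otimes> t' \<in> S <#> T"
    using s t s' t' by (auto simp: set_mult_def)
  ultimately have "transversal_perm G (S <#> T) J h (s \<otimes> t) = s' \<otimes> t'"
    using transversal_perm_eqI[OF HK.subgroup_H KJ.subgroup_K product_transversal[OF T S] _ h]
      right_transversal_subset[OF product_transversal[OF T S]] by blast
  then show ?thesis unfolding k_def[symmetric] eq by (simp add: transfer_factor_def)
qed

lemma finprod_product_transversal:
  assumes T: "is_right_transversal G H K T" and S: "is_right_transversal G K J S"
    and g: "g \<in> (S <#> T) \<rightarrow> carrier (abelianization G J)"
  shows "finprod (abelianization G J) g (S <#> T)
    = finprod (abelianization G J) (\<lambda>t. finprod (abelianization G J) (\<lambda>s. g (s \<otimes> t)) S) T"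
proof -
  interpret AJ: comm_group "abelianization G J" by (rule KJ.abelianization_K)
  have fin: "finite S" "finite T"
    using finite_right_transversal HK.subgroup_H HK.subgroup_K KJ.subgroup_K T S
      HK.finite_index KJ.finite_index by blast+
  have inj: "inj_on (\<lambda>s. s \<otimes> t) S" if "t \<in> T" for t
    using product_transversal_inj[OF T S] that by (auto simp: inj_on_def)
  have gt: "g \<in> (\<lambda>s. s \<otimes> t) ` S \<rightarrow> carrier (abelianization G J)" if "t \<in> T" for t
    using g that by (auto simp: set_mult_def)
  have "S <#> T = (\<Union>t\<in>T. (\<lambda>s. s \<otimes> t) ` S)" by (auto simp: set_mult_def)
  then have "finprod (abelianization G J) g (S <#> T)
      = finprod (abelianization G J) g (\<Union>t\<in>T. (\<lambda>s. s \<otimes> t) ` S)" by simp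
  also have "\<dots> = finprod (abelianization G J) (\<lambda>t. finprod (abelianization G J) g ((\<lambda>s. s \<otimes> t) ` S)) T"
    using fin g product_transversal_inj[OF T S]
    by (intro AJ.finprod_UN_disjoint) (auto simp: pairwise_def disjnt_def inj_on_def set_mult_def Pi_iff)
  also have "\<dots> = finprod (abelianization G J) (\<lambda>t. finprod (abelianization G J) (\<lambda>s. g (s \<otimes> t)) S) T"
  proof (rule AJ.finprod_cong'[OF refl])
    fix t assume "t \<in> T"
    then show "finprod (abelianization G J) g ((\<lambda>s. s \<otimes> t) ` S) = finprod (abelianization G J) (\<lambda>s. g (s \<otimes> t)) S"
      using gt by (simp add: AJ.finprod_reindex[OF _ inj])
  next
    show "(\<lambda>t. finprod (abelianization G J) (\<lambda>s. g (s \<otimes> t)) S) \<in> T \<rightarrow> carrier (abelianization G J)"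
      using g by (intro Pi_I AJ.finprod_closed) (auto simp: set_mult_def)
  qed
  finally show ?thesis .
qed

lemma transfer_elem_trans:
  assumes h: "h \<in> H"
  shows "transfer_class G K J (transfer_elem G H K h) = transfer_elem G H J h"
proof -
  interpret AJ: comm_group "abelianization G J" by (rule KJ.abelianization_K)
  obtain T where T: "is_right_transversal G H K T"
    using right_transversal_exists[OF HK.subgroup_H HK.subgroup_K] by blast
  obtain S where S: "is_right_transversal G K J S"
    using right_transversal_exists[OF KJ.subgroup_H KJ.subgroup_K] by blast
  define k where "k t = transfer_factor G T K h t" for t
  define g where "g x = derived G J #> transfer_factor G (S <#> T) J h x" for x
  have kK: "k t \<in> K" if "t \<in> T" for t
    unfolding k_def using transfer_factor_in[OF HK.subgroup_H HK.subgroup_K T] HK.transversal_in_H[OF T that] h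
    by blast
  have g: "g \<in> (S <#> T) \<rightarrow> carrier (abelianization G J)"
    unfolding g_def by (rule HJ.transfer_factor_rcos_in[OF product_transversal[OF T S] h])
  have gS: "(\<lambda>s. g (s \<otimes> t)) \<in> S \<rightarrow> carrier (abelianization G J)" if "t \<in> T" for t
    using g that by (auto simp: set_mult_def)
  have inner: "transfer_class G K J (derived G K #> k t) = finprod (abelianization G J) (\<lambda>s. g (s \<otimes> t)) S"
    if t: "t \<in> T" for t
  proof -
    have "transfer_class G K J (derived G K #> k t) = transfer_wrt G S J (k t)"
      by (simp add: KJ.transfer_class_rcos[OF kK[OF t]] KJ.transfer_elem_eq[OF S kK[OF t]])
    also have "\<dots> = finprod (abelianization G J) (\<lambda>s. g (s \<otimes> t)) S"
      unfolding transfer_wrt_def g_def k_def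
      using gS[OF t, unfolded g_def] transfer_factor_product[OF T S h _ t] by (intro AJ.finprod_cong') auto
    finally show ?thesis .
  qed
  have "transfer_class G K J (transfer_elem G H K h)
      = transfer_class G K J (finprod (abelianization G K) (\<lambda>t. derived G K #> k t) T)"
    unfolding HK.transfer_elem_eq[OF T h] transfer_wrt_def k_def ..
  also have "\<dots> = finprod (abelianization G J) (\<lambda>t. transfer_class G K J (derived G K #> k t)) T"
    using rcos_in_abelianization[OF HK.subgroup_K] kK
    by (intro comm_group_hom_finprod[OF HK.abelianization_K KJ.abelianization_K KJ.transfer_class_hom]) blast
  also have "\<dots> = finprod (abelianization G J) (\<lambda>t. finprod (abelianization G J) (\<lambda>s. g (s \<otimes> t)) S) T"
    using inner gS by (intro AJ.finprod_cong') (auto intro: AJ.finprod_closed)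
  also have "\<dots> = finprod (abelianization G J) g (S <#> T)"
    by (rule finprod_product_transversal[OF T S g, symmetric])
  also have "\<dots> = transfer_elem G H J h"
    unfolding HJ.transfer_elem_eq[OF product_transversal[OF T S] h] transfer_wrt_def g_def ..
  finally show ?thesis .
qed

lemma transfer_class_trans:
  assumes "C \<in> carrier (abelianization G H)"
  shows "transfer_class G K J (transfer_class G H K C) = transfer_class G H J C"
proof -
  obtain h where "h \<in> H" and "C = derived G H #> h"
    using assms abelianization_carrier[OF HK.subgroup_H] by auto
  then show ?thesis by (simp add: HK.transfer_class_rcos HJ.transfer_class_rcos transfer_elem_trans)
qed

end

section \<open>Transfer and conjugation\<close>

definition ab_image :: "('a, 'b) monoid_scheme \<Rightarrow> 'a set \<Rightarrow> ('a \<Rightarrow> 'a) \<Rightarrow> 'a set \<Rightarrow> 'a set" where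
  "ab_image G K c C = derived G K <#>\<^bsub>G\<^esub> (c ` C)"

locale transfer_conjugation =
  group G + src: transfer_subgroups G H' K'
  for G :: "('a, 'b) monoid_scheme" (structure) and H' K' +
  fixes H K :: "'a set" and c :: "'a \<Rightarrow> 'a"
  assumes subgroup_H: "subgroup H G" and subgroup_K: "subgroup K G"
    and c_hom: "c \<in> hom (G\<lparr>carrier := H'\<rparr>) G"
    and c_preimage_K: "\<And>x. x \<in> H' \<Longrightarrow> c x \<in> K \<longleftrightarrow> x \<in> K'"
    and H_eq: "H = K <#> c ` H'"
begin

interpretation c: group_hom "G\<lparr>carrier := H'\<rparr>" G c
  using subgroup_imp_group[OF src.subgroup_H] is_group c_hom
  by (simp add: group_hom_def group_hom_axioms_def)

lemma c_mult: "x \<in> H' \<Longrightarrow> y \<in> H' \<Longrightarrow> c (x \<otimes> y) = c x \<otimes> c y"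
  using c.hom_mult by simp

lemma c_one: "c \<one> = \<one>"
  using c.hom_one by simp

lemma c_inv: "x \<in> H' \<Longrightarrow> c (inv x) = inv (c x)"
  using c.hom_inv m_inv_consistent[OF src.subgroup_H] by simp

lemma c_in_H: "x \<in> H' \<Longrightarrow> c x \<in> H"
  unfolding H_eq set_mult_def using subgroup.one_closed[OF subgroup_K] c.hom_closed by force

lemma K_subset_H: "K \<subseteq> H"
  unfolding H_eq set_mult_def
  using c_one subgroup.one_closed[OF src.subgroup_H] subgroup.subset[OF subgroup_K] by force

lemma c_closed: "x \<in> H' \<Longrightarrow> c x \<in> carrier G"
  using c_in_H subgroup.subset[OF subgroup_H] by blast

lemma c_rcos_eqI:
  assumes x: "x \<in> H'" and y: "y \<in> H'" and q: "c x \<otimes> inv (c y) \<in> K"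
  shows "x \<otimes> inv y \<in> K'"
proof -
  have "x \<otimes> inv y \<in> H'" using x y subgroup.m_closed[OF src.subgroup_H] subgroup.m_inv_closed[OF src.subgroup_H] by blast
  moreover have "c (x \<otimes> inv y) = c x \<otimes> inv (c y)"
    using x y subgroup.m_inv_closed[OF src.subgroup_H] by (simp add: c_mult c_inv)
  ultimately show ?thesis using c_preimage_K q by metis
qed

lemma conj_transversal:
  assumes T: "is_right_transversal G H' K' T"
  shows "is_right_transversal G H K (c ` T)"
  unfolding is_right_transversal_def
proof (intro conjI ballI)
  have TH: "T \<subseteq> H'" by (rule right_transversal_subset[OF T])
  then show "c ` T \<subseteq> H" using c_in_H by blast
  have mem: "h \<in> K #> c t \<longleftrightarrow> h \<otimes> inv (c t) \<in> K" if "h \<in> H" "t \<in> T" for h t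
    using that TH c_closed subgroup.subset[OF subgroup_H] subgroup.rcos_module[OF subgroup_K is_group] by blast
  fix h assume h: "h \<in> H"
  then obtain k x where kx: "k \<in> K" "x \<in> H'" "h = k \<otimes> c x" unfolding H_eq set_mult_def by blast
  obtain t where t: "t \<in> T" "x \<in> K' #> t" using T kx(2) by (auto simp: is_right_transversal_def)
  have c: "k \<in> carrier G" "c x \<in> carrier G" "c t \<in> carrier G"
    using kx t TH c_closed subgroup.subset[OF subgroup_K] by auto
  have "x \<otimes> inv t \<in> K'"
    using t TH kx src.carrier_of_H subgroup.rcos_module[OF src.subgroup_K is_group] by blast
  then have "c x \<otimes> inv (c t) \<in> K"
    using c_preimage_K c_mult c_inv kx(2) t(1) TH subgroup.m_closed[OF src.subgroup_H]
      subgroup.m_inv_closed[OF src.subgroup_H] by (metis subsetD)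
  then have "k \<otimes> (c x \<otimes> inv (c t)) \<in> K" using kx(1) subgroup.m_closed[OF subgroup_K] by blast
  then have ht: "h \<otimes> inv (c t) \<in> K" using c kx(3) by (simp add: m_assoc)
  show "\<exists>!u. u \<in> c ` T \<and> h \<in> K #> u"
  proof (rule ex1I[of _ "c t"])
    show "c t \<in> c ` T \<and> h \<in> K #> c t" using t(1) ht mem[OF h t(1)] by blast
  next
    fix u assume "u \<in> c ` T \<and> h \<in> K #> u"
    then obtain t' where t': "t' \<in> T" "u = c t'" "h \<otimes> inv (c t') \<in> K" using mem[OF h] by blast
    have "inv (h \<otimes> inv (c t')) \<otimes> (h \<otimes> inv (c t)) \<in> K"
      using t'(3) ht subgroup.m_closed[OF subgroup_K] subgroup.m_inv_closed[OF subgroup_K] by blast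
    also have "inv (h \<otimes> inv (c t')) \<otimes> (h \<otimes> inv (c t)) = c t' \<otimes> inv (c t)"
      using h t t' TH c_closed subgroup.subset[OF subgroup_H]
      by (simp add: m_assoc inv_mult_group inv_mult_cancel_left subset_iff)
    finally have "t' \<otimes> inv t \<in> K'" using c_rcos_eqI t'(1) t(1) TH by blast
    then show "u = c t" using right_transversal_eqI[OF src.subgroup_H src.subgroup_K T t'(1) t(1)] t'(2) by simp
  qed
qed

lemma c_inj_on_transversal:
  assumes T: "is_right_transversal G H' K' T"
  shows "inj_on c T"
proof
  fix t1 t2 assume t: "t1 \<in> T" "t2 \<in> T" and e: "c t1 = c t2"
  have "c t1 \<otimes> inv (c t2) \<in> K"
    using e t right_transversal_subset[OF T] c_closed subgroup.one_closed[OF subgroup_K] by auto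
  then have "t1 \<otimes> inv t2 \<in> K'" using c_rcos_eqI t right_transversal_subset[OF T] by blast
  then show "t1 = t2" by (rule right_transversal_eqI[OF src.subgroup_H src.subgroup_K T t])
qed

lemma finite_index_H_K: "finite_index G H K"
proof -
  obtain T where T: "is_right_transversal G H' K' T"
    using right_transversal_exists[OF src.subgroup_H src.subgroup_K] by blast
  then have "finite (c ` T)"
    using finite_right_transversal[OF src.subgroup_H src.subgroup_K T src.finite_index] by simp
  then show ?thesis by (rule finite_index_if_finite_transversal[OF subgroup_H subgroup_K conj_transversal[OF T]])
qed

sublocale tgt: transfer_subgroups G H K
  using subgroup_H subgroup_K K_subset_H finite_index_H_K
  by (simp add: transfer_subgroups_def transfer_subgroups_axioms_def is_group)

lemma c_image_derived:
  assumes "A' \<subseteq> H'" and "c ` A' \<subseteq> A"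
  shows "c ` derived G A' \<subseteq> derived G A"
proof -
  have "c ` derived G A' = derived G (c ` A')"
    using c.derived_img[of A'] derived_consistent[OF assms(1) src.subgroup_H] assms(1) by simp
  also have "\<dots> \<subseteq> derived G A" by (rule mono_derived[OF assms(2)])
  finally show ?thesis .
qed

lemma ab_image_rcos:
  assumes A: "subgroup A G" and A': "subgroup A' G" and A'H': "A' \<subseteq> H'" and cA': "c ` A' \<subseteq> A"
    and w: "w \<in> A'"
  shows "ab_image G A c (derived G A' #> w) = derived G A #> c w"
proof -
  interpret D: subgroup "derived G A" G by (rule subgroup_derived[OF A])
  have DA': "derived G A' \<subseteq> H'" using derived_incl[OF subset_refl A'] A'H' by blast
  have cD: "c ` derived G A' \<subseteq> derived G A" by (rule c_image_derived[OF A'H' cA'])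
  have img: "c ` (derived G A' #> w) = (c ` derived G A') #> c w"
    unfolding r_coset_def using c_mult[OF _ ] DA' w A'H' by force
  have "derived G A <#> c ` derived G A' = derived G A"
  proof
    show "derived G A <#> c ` derived G A' \<subseteq> derived G A"
      using cD D.m_closed by (auto simp: set_mult_def)
    show "derived G A \<subseteq> derived G A <#> c ` derived G A'"
      using c_one subgroup.one_closed[OF subgroup_derived[OF A']] D.subset
      by (force simp: set_mult_def)
  qed
  then show ?thesis
    unfolding ab_image_def img
    using setmult_rcos_assoc[OF D.subset _ c_closed] cD D.subset w A'H' by (metis subsetD order_trans)
qed

lemma ab_image_hom:
  assumes A: "subgroup A G" and A': "subgroup A' G" and A'H': "A' \<subseteq> H'" and cA': "c ` A' \<subseteq> A"
  shows "ab_image G A c \<in> hom (abelianization G A') (abelianization G A)"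
proof (rule homI)
  fix C assume "C \<in> carrier (abelianization G A')"
  then obtain x where "x \<in> A'" "C = derived G A' #> x" using abelianization_carrier[OF A'] by auto
  then show "ab_image G A c C \<in> carrier (abelianization G A)"
    using ab_image_rcos[OF assms] cA' rcos_in_abelianization[OF A] by auto
next
  fix C1 C2 assume "C1 \<in> carrier (abelianization G A')" "C2 \<in> carrier (abelianization G A')"
  then obtain x y where xy: "x \<in> A'" "y \<in> A'" "C1 = derived G A' #> x" "C2 = derived G A' #> y"
    using abelianization_carrier[OF A'] by auto
  then show "ab_image G A c (C1 \<otimes>\<^bsub>abelianization G A'\<^esub> C2)
      = ab_image G A c C1 \<otimes>\<^bsub>abelianization G A\<^esub> ab_image G A c C2"
    using A'H' cA' subgroup.m_closed[OF A'] c_mult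
    by (simp add: abelianization_mult[OF A'] abelianization_mult[OF A] ab_image_rcos[OF assms] subset_iff image_subset_iff)
qed

lemma c_image_K': "c ` K' \<subseteq> K"
  using c_preimage_K src.K_subset_H by blast

lemma transfer_factor_conj:
  assumes T: "is_right_transversal G H' K' T" and y: "y \<in> H'" and t: "t \<in> T"
  shows "transfer_factor G (c ` T) K (c y) (c t) = c (transfer_factor G T K' y t)"
proof -
  let ?n = "transversal_perm G T K' y t"
  have tH: "t \<in> H'" using src.transversal_in_H[OF T t] .
  have n: "?n \<in> T" by (rule transversal_perm_in(1)[OF src.subgroup_H src.subgroup_K T tH y])
  then have nH: "?n \<in> H'" by (rule src.transversal_in_H[OF T])
  have eq: "c (transfer_factor G T K' y t) = c t \<otimes> c y \<otimes> inv (c ?n)"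
    unfolding transfer_factor_def
    using tH y nH subgroup.m_closed[OF src.subgroup_H] subgroup.m_inv_closed[OF src.subgroup_H]
    by (simp add: c_mult c_inv)
  have "c t \<otimes> c y \<otimes> inv (c ?n) \<in> K"
    unfolding eq[symmetric]
    using c_image_K' transfer_factor_in[OF src.subgroup_H src.subgroup_K T tH y] by blast
  then have "transversal_perm G (c ` T) K (c y) (c t) = c ?n"
    using transversal_perm_eqI[OF subgroup_H subgroup_K conj_transversal[OF T]] c_in_H tH y n by blast
  then show ?thesis unfolding eq by (simp add: transfer_factor_def)
qed

lemma transfer_elem_conj:
  assumes y: "y \<in> H'"
  shows "transfer_elem G H K (c y) = ab_image G K c (transfer_elem G H' K' y)"
proof -
  interpret AK: comm_group "abelianization G K" by (rule tgt.abelianization_K)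
  obtain T where T: "is_right_transversal G H' K' T"
    using right_transversal_exists[OF src.subgroup_H src.subgroup_K] by blast
  define k where "k t = transfer_factor G T K' y t" for t
  have kK': "k t \<in> K'" if "t \<in> T" for t
    unfolding k_def using transfer_factor_in[OF src.subgroup_H src.subgroup_K T] src.transversal_in_H[OF T that] y
    by blast
  have ckK: "c (k t) \<in> K" if "t \<in> T" for t using c_image_K' kK'[OF that] by blast
  have "transfer_elem G H K (c y) = transfer_wrt G (c ` T) K (c y)"
    by (rule tgt.transfer_elem_eq[OF conj_transversal[OF T] c_in_H[OF y]])
  also have "\<dots> = finprod (abelianization G K) (\<lambda>t. derived G K #> transfer_factor G (c ` T) K (c y) (c t)) T"
    unfolding transfer_wrt_def
    by (rule AK.finprod_reindex[OF tgt.transfer_factor_rcos_in[OF conj_transversal[OF T] c_in_H[OF y]]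
          c_inj_on_transversal[OF T]])
  also have "\<dots> = finprod (abelianization G K) (\<lambda>t. ab_image G K c (derived G K' #> k t)) T"
    using ab_image_rcos[OF subgroup_K src.subgroup_K src.K_subset_H c_image_K'] kK' ckK
      rcos_in_abelianization[OF subgroup_K] transfer_factor_conj[OF T y]
    by (intro AK.finprod_cong') (auto simp: k_def)
  also have "\<dots> = ab_image G K c (finprod (abelianization G K') (\<lambda>t. derived G K' #> k t) T)"
    using rcos_in_abelianization[OF src.subgroup_K] kK'
    by (intro comm_group_hom_finprod[symmetric] src.abelianization_K tgt.abelianization_K
        ab_image_hom[OF subgroup_K src.subgroup_K src.K_subset_H c_image_K']) blast
  also have "\<dots> = ab_image G K c (transfer_elem G H' K' y)"
    unfolding src.transfer_elem_eq[OF T y] transfer_wrt_def k_def ..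
  finally show ?thesis .
qed

lemma transfer_class_ab_image:
  assumes "C \<in> carrier (abelianization G H')"
  shows "transfer_class G H K (ab_image G H c C) = ab_image G K c (transfer_class G H' K' C)"
proof -
  obtain y where y: "y \<in> H'" and C: "C = derived G H' #> y"
    using assms abelianization_carrier[OF src.subgroup_H] by auto
  have "ab_image G H c C = derived G H #> c y"
    unfolding C using c_in_H by (intro ab_image_rcos[OF subgroup_H src.subgroup_H subset_refl _ y]) blast
  then show ?thesis
    unfolding C using c_in_H[OF y]
    by (simp add: tgt.transfer_class_rcos src.transfer_class_rcos[OF y] transfer_elem_conj[OF y])
qed

end

section \<open>Congruence subgroups of \<open>SL\<^sub>2(\<int>)\<close>\<close>

lemma SL2Z_carrier: "carrier SL2Z = {A. m2_det A = 1}"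
  by (simp add: SL2Z_def)

lemma SL2Z_mult: "x \<otimes>\<^bsub>SL2Z\<^esub> y = m2_mult x y"
  by (simp add: SL2Z_def)

lemma SL2Z_one: "\<one>\<^bsub>SL2Z\<^esub> = M2 1 0 0 1"
  by (simp add: SL2Z_def)

lemma m2_det_mult: "m2_det (m2_mult x y) = m2_det x * m2_det y"
  by (cases x; cases y) (simp add: algebra_simps)

lemma group_SL2Z: "group SL2Z"
proof (rule groupI)
  fix x y z
  show "x \<otimes>\<^bsub>SL2Z\<^esub> y \<otimes>\<^bsub>SL2Z\<^esub> z = x \<otimes>\<^bsub>SL2Z\<^esub> (y \<otimes>\<^bsub>SL2Z\<^esub> z)"
    by (cases x; cases y; cases z) (simp add: SL2Z_mult algebra_simps)
  show "\<one>\<^bsub>SL2Z\<^esub> \<otimes>\<^bsub>SL2Z\<^esub> x = x"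
    by (cases x) (simp add: SL2Z_mult SL2Z_one)
  assume "x \<in> carrier SL2Z"
  then obtain p q u v where x: "x = M2 p q u v" and det: "p * v - q * u = 1"
    by (cases x) (simp add: SL2Z_carrier)
  show "\<exists>y\<in>carrier SL2Z. y \<otimes>\<^bsub>SL2Z\<^esub> x = \<one>\<^bsub>SL2Z\<^esub>"
    using det by (intro bexI[of _ "M2 v (- q) (- u) p"]) (simp_all add: x SL2Z_mult SL2Z_one SL2Z_carrier algebra_simps)
qed (auto simp: SL2Z_carrier SL2Z_mult SL2Z_one m2_det_mult)

interpretation SL2Z: group SL2Z
  by (rule group_SL2Z)

lemma SL2Z_inv: "p * v - q * u = 1 \<Longrightarrow> inv\<^bsub>SL2Z\<^esub> (M2 p q u v) = M2 v (- q) (- u) p"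
  by (rule SL2Z.inv_equality) (simp_all add: SL2Z_mult SL2Z_one SL2Z_carrier algebra_simps)

lemma Gamma1_iff:
  "M2 p q u v \<in> Gamma1 M \<longleftrightarrow>
    p * v - q * u = 1 \<and> [u = 0] (mod int M) \<and> [p = 1] (mod int M) \<and> [v = 1] (mod int M)"
  by (simp add: Gamma1_def)

lemma Gamma0_iff: "M2 p q u v \<in> Gamma0 M \<longleftrightarrow> p * v - q * u = 1 \<and> [u = 0] (mod int M)"
  by (simp add: Gamma0_def)

lemma Gamma_up0_2_iff: "M2 p q u v \<in> Gamma_up0_2 \<longleftrightarrow> p * v - q * u = 1 \<and> even q"
  by (simp add: Gamma_up0_2_def cong_0_iff)

lemma det_entries_mult:
  fixes p q u v p' q' u' v' :: int
  shows "(p * p' + q * u') * (u * q' + v * v') - (p * q' + q * v') * (u * p' + v * u')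
    = (p * v - q * u) * (p' * v' - q' * u')"
  by (simp add: algebra_simps)

lemma subgroup_Gamma1: "subgroup (Gamma1 M) SL2Z"
proof (rule SL2Z.subgroupI)
  show "Gamma1 M \<subseteq> carrier SL2Z" by (auto simp: Gamma1_def SL2Z_carrier)
  show "Gamma1 M \<noteq> {}" using Gamma1_iff[of 1 0 0 1 M] by auto
  fix x y assume x: "x \<in> Gamma1 M" and y: "y \<in> Gamma1 M"
  obtain p q u v where ex: "x = M2 p q u v" by (cases x)
  obtain p' q' u' v' where ey: "y = M2 p' q' u' v'" by (cases y)
  have hx: "p * v - q * u = 1" "[u = 0] (mod int M)" "[p = 1] (mod int M)" "[v = 1] (mod int M)"
    using x by (simp_all add: ex Gamma1_iff)
  have hy: "p' * v' - q' * u' = 1" "[u' = 0] (mod int M)" "[p' = 1] (mod int M)" "[v' = 1] (mod int M)"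
    using y by (simp_all add: ey Gamma1_iff)
  have "[- u = - 0] (mod int M)" using hx(2) by (simp only: cong_minus_minus_iff)
  then show "inv\<^bsub>SL2Z\<^esub> x \<in> Gamma1 M"
    using hx by (simp add: ex SL2Z_inv Gamma1_iff algebra_simps)
  have "[u * p' + v * u' = 0 * p' + 1 * 0] (mod int M)"
    "[p * p' + q * u' = 1 * 1 + q * 0] (mod int M)"
    "[u * q' + v * v' = 0 * q' + 1 * 1] (mod int M)"
    using hx hy by (intro cong_add cong_mult cong_refl; simp)+
  then show "x \<otimes>\<^bsub>SL2Z\<^esub> y \<in> Gamma1 M"
    using hx(1) hy(1) by (simp add: ex ey SL2Z_mult Gamma1_iff det_entries_mult)
qed

lemma subgroup_Gamma0: "subgroup (Gamma0 M) SL2Z"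
proof (rule SL2Z.subgroupI)
  show "Gamma0 M \<subseteq> carrier SL2Z" by (auto simp: Gamma0_def SL2Z_carrier)
  show "Gamma0 M \<noteq> {}" using Gamma0_iff[of 1 0 0 1 M] by auto
  fix x y assume x: "x \<in> Gamma0 M" and y: "y \<in> Gamma0 M"
  obtain p q u v where ex: "x = M2 p q u v" by (cases x)
  obtain p' q' u' v' where ey: "y = M2 p' q' u' v'" by (cases y)
  have hx: "p * v - q * u = 1" "[u = 0] (mod int M)" using x by (simp_all add: ex Gamma0_iff)
  have hy: "p' * v' - q' * u' = 1" "[u' = 0] (mod int M)" using y by (simp_all add: ey Gamma0_iff)
  have "[- u = - 0] (mod int M)" using hx(2) by (simp only: cong_minus_minus_iff)
  then show "inv\<^bsub>SL2Z\<^esub> x \<in> Gamma0 M"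
    using hx by (simp add: ex SL2Z_inv Gamma0_iff algebra_simps)
  have "[u * p' + v * u' = 0 * p' + v * 0] (mod int M)"
    using hx hy by (intro cong_add cong_mult cong_refl; simp)
  then show "x \<otimes>\<^bsub>SL2Z\<^esub> y \<in> Gamma0 M"
    using hx(1) hy(1) by (simp add: ex ey SL2Z_mult Gamma0_iff det_entries_mult)
qed

lemma subgroup_Gamma_up0_2: "subgroup Gamma_up0_2 SL2Z"
proof (rule SL2Z.subgroupI)
  show "Gamma_up0_2 \<subseteq> carrier SL2Z" by (auto simp: Gamma_up0_2_def SL2Z_carrier)
  show "Gamma_up0_2 \<noteq> {}" using Gamma_up0_2_iff[of 1 0 0 1] by auto
  fix x y assume x: "x \<in> Gamma_up0_2" and y: "y \<in> Gamma_up0_2"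
  obtain p q u v where ex: "x = M2 p q u v" by (cases x)
  obtain p' q' u' v' where ey: "y = M2 p' q' u' v'" by (cases y)
  have hx: "p * v - q * u = 1" "even q" using x by (simp_all add: ex Gamma_up0_2_iff)
  have hy: "p' * v' - q' * u' = 1" "even q'" using y by (simp_all add: ey Gamma_up0_2_iff)
  show "inv\<^bsub>SL2Z\<^esub> x \<in> Gamma_up0_2"
    using hx by (simp add: ex SL2Z_inv Gamma_up0_2_iff algebra_simps)
  show "x \<otimes>\<^bsub>SL2Z\<^esub> y \<in> Gamma_up0_2"
    using hx hy by (simp add: ex ey SL2Z_mult Gamma_up0_2_iff det_entries_mult)
qed

lemma subgroup_Phi: "subgroup (Phi N r s) SL2Z"
  unfolding Phi_def by (rule SL2Z.subgroups_Inter_pair[OF subgroup_Gamma1 subgroup_Gamma0])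

lemma subgroup_Int_Gamma_up0_2: "subgroup A SL2Z \<Longrightarrow> subgroup (A \<inter> Gamma_up0_2) SL2Z"
  by (rule SL2Z.subgroups_Inter_pair[OF _ subgroup_Gamma_up0_2])

lemma Phi_iff:
  "M2 p q u v \<in> Phi N r s \<longleftrightarrow> p * v - q * u = 1 \<and> [u = 0] (mod int N * 2 ^ s) \<and>
    [p = 1] (mod int N * 2 ^ s) \<and> [v = 1] (mod int N * 2 ^ s) \<and> [u = 0] (mod 2 ^ r)"
  by (auto simp: Phi_def Gamma1_iff Gamma0_iff)

lemma Phi_diag: "Phi N r r = Gamma1 (N * 2 ^ r)"
  by (auto simp: Phi_def Gamma1_def Gamma0_def cong_0_iff intro: dvd_mult_left)

definition Gamma_principal :: "nat \<Rightarrow> m2 set" where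
  "Gamma_principal M = {M2 p q u v | p q u v. p * v - q * u = 1 \<and>
      [p = 1] (mod int M) \<and> [q = 0] (mod int M) \<and> [u = 0] (mod int M) \<and> [v = 1] (mod int M)}"

lemma Gamma_principal_iff:
  "M2 p q u v \<in> Gamma_principal M \<longleftrightarrow> p * v - q * u = 1 \<and>
    [p = 1] (mod int M) \<and> [q = 0] (mod int M) \<and> [u = 0] (mod int M) \<and> [v = 1] (mod int M)"
  by (simp add: Gamma_principal_def)

fun entries_mod :: "int \<Rightarrow> m2 \<Rightarrow> int \<times> int \<times> int \<times> int" where
  "entries_mod M (M2 p q u v) = (p mod M, q mod M, u mod M, v mod M)"

lemma entries_mod_eq_imp_Gamma_principal:
  assumes x: "x \<in> carrier SL2Z" and y: "y \<in> carrier SL2Z" and e: "entries_mod (int M) x = entries_mod (int M) y"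
  shows "x \<otimes>\<^bsub>SL2Z\<^esub> inv\<^bsub>SL2Z\<^esub> y \<in> Gamma_principal M"
proof -
  obtain a b c d where ex: "x = M2 a b c d" by (cases x)
  obtain a' b' c' d' where ey: "y = M2 a' b' c' d'" by (cases y)
  have dx: "a * d - b * c = 1" and dy: "a' * d' - b' * c' = 1" using x y by (simp_all add: ex ey SL2Z_carrier)
  have h: "[a = a'] (mod int M)" "[b = b'] (mod int M)" "[c = c'] (mod int M)" "[d = d'] (mod int M)"
    using e by (simp_all add: ex ey cong_def)
  have "[a * d' + b * - c' = a' * d' + b' * - c'] (mod int M)"
    "[a * - b' + b * a' = a' * - b' + b' * a'] (mod int M)"
    "[c * d' + d * - c' = c' * d' + d' * - c'] (mod int M)"
    "[c * - b' + d * a' = c' * - b' + d' * a'] (mod int M)"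
    using h by (intro cong_add cong_mult cong_refl; simp)+
  moreover have "m2_det (m2_mult (M2 a b c d) (M2 d' (- b') (- c') a')) = 1"
    by (simp only: m2_det_mult) (simp add: dx dy algebra_simps)
  ultimately show ?thesis
    using dy by (simp add: ex ey SL2Z_inv SL2Z_mult Gamma_principal_iff mult.commute[of d' a'] mult.commute[of c' b'])
qed

lemma finite_index_if_Gamma_principal_subset:
  assumes A: "subgroup A SL2Z" and J: "subgroup J SL2Z" and M: "M > 0"
    and principal: "Gamma_principal M \<subseteq> J"
  shows "finite_index SL2Z A J"
proof -
  have carr: "x \<in> carrier SL2Z" if "x \<in> A" for x using subgroup.subset[OF A] that by blast
  define rep where "rep v = (SOME h. h \<in> A \<and> entries_mod M h = v)" for v
  have "entries_mod M x \<in> {0..<int M} \<times> {0..<int M} \<times> {0..<int M} \<times> {0..<int M}" for x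
    using M by (cases x) auto
  then have fin: "finite (entries_mod M ` A)" by (meson finite_SigmaI finite_atLeastLessThan_int finite_subset image_subsetI)
  have "J #>\<^bsub>SL2Z\<^esub> h \<in> (\<lambda>v. J #>\<^bsub>SL2Z\<^esub> rep v) ` entries_mod M ` A" if h: "h \<in> A" for h
  proof -
    have r: "rep (entries_mod M h) \<in> A \<and> entries_mod M (rep (entries_mod M h)) = entries_mod M h"
      unfolding rep_def by (rule someI[of _ h]) (use h in simp)
    then have "h \<otimes>\<^bsub>SL2Z\<^esub> inv\<^bsub>SL2Z\<^esub> rep (entries_mod M h) \<in> J"
      using entries_mod_eq_imp_Gamma_principal[of h _ M] carr h principal by auto
    then have "J #>\<^bsub>SL2Z\<^esub> h = J #>\<^bsub>SL2Z\<^esub> rep (entries_mod M h)"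
      using r h carr subgroup.rcos_module[OF J SL2Z.is_group] SL2Z.rcos_mem_iff_rcos_eq[OF J] by metis
    then show ?thesis using h by blast
  qed
  then show ?thesis
    unfolding finite_index_def using fin by (meson finite_imageI finite_subset image_subsetI)
qed

lemma Gamma_principal_subset: "Gamma_principal (2 * M) \<subseteq> Gamma1 M \<inter> Gamma_up0_2"
proof -
  have "[x = y] (mod int M)" and "[x = y] (mod 2)" if "[x = y] (mod int (2 * M))" for x y :: int
    using that cong_dvd_modulus[of x y "int (2 * M)"] by auto
  then show ?thesis
    by (auto simp: Gamma_principal_def Gamma1_iff Gamma_up0_2_iff cong_0_iff)
qed

lemma Phi_dvd_iff:
  "M2 p q u v \<in> Phi N r s \<longleftrightarrow> p * v - q * u = 1 \<and> int N * 2 ^ s dvd u \<and>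
    int N * 2 ^ s dvd p - 1 \<and> int N * 2 ^ s dvd v - 1 \<and> 2 ^ r dvd u"
  by (simp add: Phi_iff cong_iff_dvd_diff cong_0_iff)

lemma Gamma1_dvd_iff:
  "M2 p q u v \<in> Gamma1 M \<longleftrightarrow>
    p * v - q * u = 1 \<and> int M dvd u \<and> int M dvd p - 1 \<and> int M dvd v - 1"
  by (simp add: Gamma1_iff cong_iff_dvd_diff cong_0_iff)

section \<open>The Atkin operator\<close>

lemma conj_t_mult:
  assumes "x \<in> Gamma_up0_2" and "y \<in> Gamma_up0_2"
  shows "conj_t (x \<otimes>\<^bsub>SL2Z\<^esub> y) = conj_t x \<otimes>\<^bsub>SL2Z\<^esub> conj_t y"
proof -
  obtain p q u v where x: "x = M2 p q u v" by (cases x)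
  obtain p' q' u' v' where y: "y = M2 p' q' u' v'" by (cases y)
  obtain k where q: "q = 2 * k" using assms(1) by (auto simp: x Gamma_up0_2_iff elim: evenE)
  obtain k' where q': "q' = 2 * k'" using assms(2) by (auto simp: y Gamma_up0_2_iff elim: evenE)
  have "p * (2 * k') + 2 * k * v' = 2 * (p * k' + k * v')" by (simp add: algebra_simps)
  then show ?thesis by (simp add: x y q q' SL2Z_mult algebra_simps)
qed

lemma conj_t_hom: "A \<subseteq> Gamma_up0_2 \<Longrightarrow> conj_t \<in> hom (SL2Z\<lparr>carrier := A\<rparr>) SL2Z"
proof (rule homI)
  fix x assume "A \<subseteq> Gamma_up0_2" "x \<in> carrier (SL2Z\<lparr>carrier := A\<rparr>)"
  then have "x \<in> Gamma_up0_2" by auto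
  then show "conj_t x \<in> carrier SL2Z"
    by (cases x) (auto simp: Gamma_up0_2_iff SL2Z_carrier elim!: evenE)
qed (simp add: conj_t_mult subset_iff)

locale atkin_setting =
  fixes N r s :: nat
  assumes odd_N: "odd N" and two_le_s: "2 \<le> s" and s_le_r: "s \<le> r"
begin

lemma level_dvd: "int N * 2 ^ s dvd int N * 2 ^ r"
  using s_le_r by (simp add: le_imp_power_dvd)

lemma Gamma1_subset_Phi: "Gamma1 (N * 2 ^ r) \<subseteq> Phi N r s"
proof
  fix x assume "x \<in> Gamma1 (N * 2 ^ r)"
  moreover obtain p q u v where "x = M2 p q u v" by (cases x)
  ultimately show "x \<in> Phi N r s"
    using dvd_trans[OF level_dvd] dvd_trans[of "2 ^ r" "int N * 2 ^ r" u]
    by (auto simp: Phi_dvd_iff Gamma1_dvd_iff)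
qed

lemma dvd_level_iff: "int N * 2 ^ k dvd x \<longleftrightarrow> int N dvd x \<and> 2 ^ k dvd x"
  using odd_N by (auto intro: divides_mult dvd_mult_left dvd_mult_right)

lemma conj_t_in_Phi: "x \<in> Phi N r s \<inter> Gamma_up0_2 \<Longrightarrow> conj_t x \<in> Phi N r s"
  by (cases x) (auto simp: Phi_dvd_iff Gamma_up0_2_iff elim!: evenE)

lemma conj_t_in_Gamma1_iff:
  assumes x: "x \<in> Phi N r s \<inter> Gamma_up0_2"
  shows "conj_t x \<in> Gamma1 (N * 2 ^ r) \<longleftrightarrow> x \<in> Gamma1 (N * 2 ^ r) \<inter> Gamma_up0_2"
proof -
  obtain p q u v where xe: "x = M2 p q u v" by (cases x)
  obtain k where q: "q = 2 * k" using x by (auto simp: xe Gamma_up0_2_iff elim: evenE)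
  have "int N dvd u" "2 ^ r dvd u"
    using x dvd_mult_left[of "int N" "2 ^ s" u] by (auto simp: xe Phi_dvd_iff)
  then have u: "int N * 2 ^ r dvd u" by (simp add: dvd_level_iff)
  then show ?thesis
    using x by (auto simp: xe q Gamma1_dvd_iff Gamma_up0_2_iff Phi_dvd_iff)
qed

text \<open>
  Writing \<open>c = 2\<^sup>r c\<^sub>0\<close>, the choice \<open>m = N 2\<^sup>r c\<^sub>0\<close> gives \<open>m a + c = 2\<^sup>r c\<^sub>0 (N a + 1)\<close>, and
  \<open>N a + 1\<close> is even because \<open>N\<close> and \<open>a\<close> are odd.
\<close>

lemma lower_left_shift:
  assumes h: "M2 a b c d \<in> Phi N r s"
  obtains m where "int N * 2 ^ r dvd m" and "int N * 2 ^ Suc r dvd m * a + c"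
proof -
  have "2 ^ r dvd c" "int N dvd c"
    using h dvd_mult_left[of "int N" "2 ^ s" c] by (auto simp: Phi_dvd_iff)
  then obtain c0 where c0: "c = 2 ^ r * c0" and "int N dvd 2 ^ r * c0" by (auto elim: dvdE)
  then have N_c0: "int N dvd c0" using odd_N by (simp add: coprime_dvd_mult_right_iff)
  have "(2::int) dvd int N * 2 ^ s" using two_le_s by (simp add: dvd_mult power_eq_if)
  then have "odd a" using h dvd_trans[of 2 "int N * 2 ^ s" "a - 1"] by (auto simp: Phi_dvd_iff)
  then have "even (int N * a + 1)" using odd_N by simp
  then obtain e where e: "int N * a + 1 = 2 * e" by (rule evenE)
  have "m * a + c = 2 ^ Suc r * (c0 * e)" if m: "m = int N * 2 ^ r * c0" for m
  proof -
    have "m * a + c = 2 ^ r * c0 * (int N * a + 1)" using m c0 by (simp add: algebra_simps)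
    then show ?thesis using e by simp
  qed
  then have "int N * 2 ^ Suc r dvd int N * 2 ^ r * c0 * a + c"
    using N_c0 \<open>int N dvd c\<close> by (simp add: dvd_level_iff)
  then show ?thesis using that[of "int N * 2 ^ r * c0"] by simp
qed

lemma Phi_eq_Gamma1_conj: "Phi N r s = Gamma1 (N * 2 ^ r) <#>\<^bsub>SL2Z\<^esub> conj_t ` (Phi N r s \<inter> Gamma_up0_2)"
proof
  show "Gamma1 (N * 2 ^ r) <#>\<^bsub>SL2Z\<^esub> conj_t ` (Phi N r s \<inter> Gamma_up0_2) \<subseteq> Phi N r s"
    using Gamma1_subset_Phi conj_t_in_Phi subgroup.m_closed[OF subgroup_Phi]
    by (auto simp: set_mult_def)
next
  show "Phi N r s \<subseteq> Gamma1 (N * 2 ^ r) <#>\<^bsub>SL2Z\<^esub> conj_t ` (Phi N r s \<inter> Gamma_up0_2)"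
  proof
    fix h assume "h \<in> Phi N r s"
    moreover obtain a b c d where he: "h = M2 a b c d" by (cases h)
    ultimately have h: "M2 a b c d \<in> Phi N r s" by simp
    obtain m where m: "int N * 2 ^ r dvd m" and mac: "int N * 2 ^ Suc r dvd m * a + c"
      using lower_left_shift[OF h] .
    from mac obtain k where k: "m * a + c = int N * 2 ^ Suc r * k" by (rule dvdE)
    define u where "u = int N * 2 ^ r * k"
    have u: "m * a + c = 2 * u" using k by (simp add: u_def)
    have "int N * 2 ^ r dvd u" by (simp add: u_def)
    then have u_dvd: "int N * 2 ^ s dvd u" "2 ^ r dvd u"
      using dvd_trans[OF level_dvd] dvd_mult_right[of "2 ^ r" "int N" u] by auto
    define x where "x = M2 a (2 * b) u (m * b + d)"
    have "a * (m * b + d) - 2 * b * u = a * (m * b + d) - b * (m * a + c)"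
      unfolding u by (simp add: algebra_simps)
    also have "\<dots> = a * d - b * c" by (simp add: algebra_simps)
    moreover have "int N * 2 ^ s dvd m * b + (d - 1)"
      using h dvd_trans[OF level_dvd m] by (simp add: Phi_dvd_iff)
    then have "int N * 2 ^ s dvd m * b + d - 1" by (simp add: add_diff_eq)
    ultimately have x: "x \<in> Phi N r s \<inter> Gamma_up0_2"
      using h u_dvd by (simp add: x_def Phi_dvd_iff Gamma_up0_2_iff)
    have k: "M2 1 0 (- m) 1 \<in> Gamma1 (N * 2 ^ r)" using m by (simp add: Gamma1_dvd_iff)
    have "h = M2 1 0 (- m) 1 \<otimes>\<^bsub>SL2Z\<^esub> conj_t x"
      using u by (simp add: he x_def SL2Z_mult flip: u)
    then show "h \<in> Gamma1 (N * 2 ^ r) <#>\<^bsub>SL2Z\<^esub> conj_t ` (Phi N r s \<inter> Gamma_up0_2)"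
      using k x by (auto simp: set_mult_def)
  qed
qed

lemma transfer_subgroups_SL2Z:
  assumes "subgroup H SL2Z" and "subgroup K SL2Z" and "K \<subseteq> H"
    and "Gamma1 (N * 2 ^ r) \<inter> Gamma_up0_2 \<subseteq> K"
  shows "transfer_subgroups SL2Z H K"
proof -
  have "finite_index SL2Z H K"
    using odd_N Gamma_principal_subset[of "N * 2 ^ r"] assms
    by (intro finite_index_if_Gamma_principal_subset[where M = "2 * (N * 2 ^ r)"]) (auto simp: odd_pos)
  then show ?thesis
    using assms group_SL2Z by (simp add: transfer_subgroups_def transfer_subgroups_axioms_def)
qed

sublocale upper: transfer_tower SL2Z "Phi N r s" "Phi N r s \<inter> Gamma_up0_2" "Gamma1 (N * 2 ^ r) \<inter> Gamma_up0_2"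
  using Gamma1_subset_Phi subgroup_Phi subgroup_Gamma1
  by (intro transfer_tower.intro group_SL2Z transfer_subgroups_SL2Z subgroup_Int_Gamma_up0_2) auto

sublocale lower: transfer_tower SL2Z "Phi N r s" "Gamma1 (N * 2 ^ r)" "Gamma1 (N * 2 ^ r) \<inter> Gamma_up0_2"
  using Gamma1_subset_Phi subgroup_Phi subgroup_Gamma1
  by (intro transfer_tower.intro group_SL2Z transfer_subgroups_SL2Z subgroup_Int_Gamma_up0_2) auto

sublocale conj: transfer_conjugation SL2Z "Phi N r s \<inter> Gamma_up0_2" "Gamma1 (N * 2 ^ r) \<inter> Gamma_up0_2"
  "Phi N r s" "Gamma1 (N * 2 ^ r)" conj_t
  using upper.KJ.transfer_subgroups_axioms subgroup_Phi subgroup_Gamma1 conj_t_hom[of "Phi N r s \<inter> Gamma_up0_2"]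
    conj_t_in_Gamma1_iff Phi_eq_Gamma1_conj
  by (intro transfer_conjugation.intro transfer_conjugation_axioms.intro) auto

end

lemma ab_eq_abelianization: "ab H = abelianization SL2Z H"
  by (simp add: ab_def abelianization_def)

lemma transfer_eq_transfer_class: "transfer H K C = transfer_class SL2Z H K C"
  by (simp add: transfer_def transfer_class_def transfer_elem_def transfer_wrt_def transfer_factor_def
      transversal_perm_def is_right_transversal_def right_transversal_def ab_eq_abelianization SL2Z_mult
      Let_def)

lemma atkin_eq:
  "atkin N r s C = ab_image SL2Z (Phi N r s) conj_t (transfer_class SL2Z (Phi N r s) (Phi N r s \<inter> Gamma_up0_2) C)"
  by (simp add: atkin_def ab_incl_def ab_image_def transfer_eq_transfer_class)

theorem lemma3p6:
  fixes N r s :: nat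
  assumes "odd N" and "N > 0" and "2 \<le> s" and "s \<le> r"
  shows "\<forall>Cl \<in> carrier (ab (Phi N r s)).
           transfer (Phi N r s) (Gamma1 (N * 2^r)) (atkin N r s Cl)
         = atkin N r r (transfer (Phi N r s) (Gamma1 (N * 2^r)) Cl)"
proof
  interpret atkin_setting N r s using assms by unfold_locales
  fix Cl assume "Cl \<in> carrier (ab (Phi N r s))"
  then have Cl: "Cl \<in> carrier (abelianization SL2Z (Phi N r s))" by (simp add: ab_eq_abelianization)
  then have "transfer_class SL2Z (Phi N r s) (Phi N r s \<inter> Gamma_up0_2) Cl
      \<in> carrier (abelianization SL2Z (Phi N r s \<inter> Gamma_up0_2))"
    using upper.HK.transfer_class_hom by (auto simp: hom_def)
  then have "transfer (Phi N r s) (Gamma1 (N * 2^r)) (atkin N r s Cl)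
      = ab_image SL2Z (Gamma1 (N * 2^r)) conj_t (transfer_class SL2Z (Phi N r s \<inter> Gamma_up0_2)
          (Gamma1 (N * 2^r) \<inter> Gamma_up0_2) (transfer_class SL2Z (Phi N r s) (Phi N r s \<inter> Gamma_up0_2) Cl))"
    by (simp add: transfer_eq_transfer_class atkin_eq conj.transfer_class_ab_image)
  also have "\<dots> = ab_image SL2Z (Gamma1 (N * 2^r)) conj_t (transfer_class SL2Z (Gamma1 (N * 2^r))
      (Gamma1 (N * 2^r) \<inter> Gamma_up0_2) (transfer_class SL2Z (Phi N r s) (Gamma1 (N * 2^r)) Cl))"
    by (simp add: upper.transfer_class_trans[OF Cl] lower.transfer_class_trans[OF Cl])
  also have "\<dots> = atkin N r r (transfer (Phi N r s) (Gamma1 (N * 2^r)) Cl)"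
    by (simp add: atkin_eq Phi_diag transfer_eq_transfer_class)
  finally show "transfer (Phi N r s) (Gamma1 (N * 2^r)) (atkin N r s Cl)
      = atkin N r r (transfer (Phi N r s) (Gamma1 (N * 2^r)) Cl)" .
qed

end
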